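(* Consider the closed-loop system described in the context. Assume the plant satisfies Assumptions A2 and A3, and at least one of the following holds: $g$ is bounded, or $\tau_p=0$. Let $T>0$ and let $X_T\subset X_\delta=\mathbb{R}^n\times U_\delta$ be a compact set such that for every $(x_0,u_0)\in X_T$, the solution $x$ of $\dot x=f(x,u_0)$ (constant input $u_0$) with $x(0)=x_0$ satisfies $\|x(T)-\Xi(u_0)\|\le\varepsilon_0$. Then there exists $\kappa_T>0$ such that for any gain $k\in(0,\kappa_T)$ and any $r\in Y$, if the initial state $(x_0,u_0)$ of the closed-loop system is in $X_T$, then its state trajectory $(x,u_I)$ satisfies $$x(t)\to\Xi(u_r),\qquad u(t)\to u_r,\qquad y(t)\to r\qquad(t\to\infty),$$ and this convergence is at an exponential rate.
   Context: Plant: $\dot x=f(x,u)$, $y=g(x)$, $f\in C^2(\mathbb{R}^n\times\mathbb{R};\mathbb{R}^n)$, $g:\mathbb{R}^n\to\mathbb{R}$ locally Lipschitz. Fix $u_{min}<u_{max}$, $U=[u_{min},u_{max}]$, $U_\delta=[u_{min}-\delta,u_{max}+\delta]$. For $w\in\mathbb{R}$, $w^+=\max\{w,0\}$, $w^-=\min\{w,0\}$. Saturating integrator: $\dot u_I=\mathscr{S}(u_I,w)$, $\mathscr{S}(u_I,w)=w^+$ if $u_I\le u_{min}$, $w$ if $u_I\in(u_{min},u_{max})$, $w^-$ if $u_I\ge u_{max}$ (trajectories for $L^1$ inputs defined by continuous extension from polynomial inputs). For gains $k>0$, $\tau_p\ge0$ and constant reference $r$, the closed-loop system is $\dot x=f(x,u_I+\tau_pk(r-g(x)))$,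 $\dot u_I=\mathscr{S}(u_I,k(r-g(x)))$, with plant input $u=u_I+\tau_pk(r-g(x))$ and output $y=g(x)$. Assumption A1: there exist $\delta>0$, $\Xi\in C^1(U_\delta;\mathbb{R}^n)$ with $f(\Xi(u),u)=0$ on $U_\delta$, and $\varepsilon_0>0,\lambda>0,m\ge1$ such that for each constant $u_0\in U_\delta$, solutions of $\dot x=f(x,u_0)$ with $\|x(0)-\Xi(u_0)\|\le\varepsilon_0$ satisfy $\|x(t)-\Xi(u_0)\|\le me^{-\lambda t}\|x(0)-\Xi(u_0)\|$, $t\ge0$. Assumption A2: A1 holds and $G(u):=g(\Xi(u))$ satisfies $G(b)-G(a)\ge\mu(b-a)$ for all $a<b$ in $U_\delta$, some $\mu>0$. $Y=[G(u_{min}),G(u_{max})]$; $u_r=G^{-1}(r)$ for $r\in Y$. Assumption A3: A1 holds and there is $\gamma\in\mathcal{K}_\infty$ (continuous, increasing, unbounded, $\gamma(0)=0$) such that for every $x_0\in\mathbb{R}^n$, $u_0\in U_\delta$, $u\in C([0,\infty);\mathbb{R})$, the solution of $\dot x=f(x,u)$, $x(0)=x_0$ satisfies $\limsup_{t\to\infty}\|x(t)-\Xi(u_0)\|\le\gamma(\limsup_{t\to\infty}|u(t)-u_0|)$. *)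

theory Defs
  imports "HOL-Analysis.Analysis"
begin

definition C1_map :: "('a::real_normed_vector \<Rightarrow> 'b::real_normed_vector) \<Rightarrow> bool" where
  "C1_map F \<longleftrightarrow> (\<exists>F'. (\<forall>z. (F has_derivative blinfun_apply (F' z)) (at z)) \<and> continuous_on UNIV F')"

definition C2_map :: "('a::real_normed_vector \<Rightarrow> 'b::real_normed_vector) \<Rightarrow> bool" where
  "C2_map F \<longleftrightarrow> (\<exists>F'. (\<forall>z. (F has_derivative blinfun_apply (F' z)) (at z)) \<and> C1_map F')"

definition C1_on :: "real set \<Rightarrow> (real \<Rightarrow> 'b::real_normed_vector) \<Rightarrow> bool" where
  "C1_on S h \<longleftrightarrow> (\<exists>D. (\<forall>u\<in>S. (h has_vector_derivative D u) (at u within S)) \<and> continuous_on S D)"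

definition loc_lipschitz :: "('a::metric_space \<Rightarrow> 'b::metric_space) \<Rightarrow> bool" where
  "loc_lipschitz h \<longleftrightarrow> (\<forall>x. \<exists>r>0. \<exists>L. L-lipschitz_on (cball x r) h)"

definition Kinf :: "(real \<Rightarrow> real) \<Rightarrow> bool" where
  "Kinf \<gamma> \<longleftrightarrow> continuous_on {0..} \<gamma> \<and> strict_mono_on {0..} \<gamma> \<and> \<gamma> 0 = 0 \<and>
      filterlim \<gamma> at_top at_top"

definition ext_gamma :: "(real \<Rightarrow> real) \<Rightarrow> ereal \<Rightarrow> ereal" where
  "ext_gamma \<gamma> s = (if s = \<infinity> then \<infinity> else if s = -\<infinity> then -\<infinity> else ereal (\<gamma> (real_of_ereal s)))"

definition plant_sol :: "('a::real_normed_vector \<Rightarrow> real \<Rightarrow> 'a) \<Rightarrow> (real \<Rightarrow> real) \<Rightarrow> real set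
    \<Rightarrow> (real \<Rightarrow> 'a) \<Rightarrow> bool" where
  "plant_sol f u I x \<longleftrightarrow> (\<forall>t\<in>I. (x has_vector_derivative f (x t) (u t)) (at t within I))"

definition Udelta :: "real \<Rightarrow> real \<Rightarrow> real \<Rightarrow> real set" where
  "Udelta umin umax \<delta> = {umin - \<delta> .. umax + \<delta>}"

definition A1 :: "('a::euclidean_space \<Rightarrow> real \<Rightarrow> 'a) \<Rightarrow> (real \<Rightarrow> 'a) \<Rightarrow> real \<Rightarrow> real \<Rightarrow> real
    \<Rightarrow> real \<Rightarrow> real \<Rightarrow> real \<Rightarrow> bool" where
  "A1 f \<Xi> umin umax \<delta> \<epsilon>0 lam m \<longleftrightarrow>
     \<delta> > 0 \<and> C1_on (Udelta umin umax \<delta>) \<Xi> \<and>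
     (\<forall>u\<in>Udelta umin umax \<delta>. f (\<Xi> u) u = 0) \<and>
     \<epsilon>0 > 0 \<and> lam > 0 \<and> m \<ge> 1 \<and>
     (\<forall>u0\<in>Udelta umin umax \<delta>. \<forall>x T. T \<ge> 0 \<and> plant_sol f (\<lambda>_. u0) {0..T} x \<and>
        norm (x 0 - \<Xi> u0) \<le> \<epsilon>0 \<longrightarrow>
        (\<forall>t\<in>{0..T}. norm (x t - \<Xi> u0) \<le> m * exp (- lam * t) * norm (x 0 - \<Xi> u0)))"

definition A2 :: "('a::euclidean_space \<Rightarrow> real \<Rightarrow> 'a) \<Rightarrow> ('a \<Rightarrow> real) \<Rightarrow> (real \<Rightarrow> 'a) \<Rightarrow> real \<Rightarrow> real
    \<Rightarrow> real \<Rightarrow> real \<Rightarrow> real \<Rightarrow> real \<Rightarrow> real \<Rightarrow> bool" where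
  "A2 f g \<Xi> umin umax \<delta> \<epsilon>0 lam m \<mu> \<longleftrightarrow>
     A1 f \<Xi> umin umax \<delta> \<epsilon>0 lam m \<and> \<mu> > 0 \<and>
     (\<forall>a\<in>Udelta umin umax \<delta>. \<forall>b\<in>Udelta umin umax \<delta>. a < b \<longrightarrow>
        g (\<Xi> b) - g (\<Xi> a) \<ge> \<mu> * (b - a))"

definition A3 :: "('a::euclidean_space \<Rightarrow> real \<Rightarrow> 'a) \<Rightarrow> (real \<Rightarrow> 'a) \<Rightarrow> real \<Rightarrow> real
    \<Rightarrow> real \<Rightarrow> (real \<Rightarrow> real) \<Rightarrow> bool" where
  "A3 f \<Xi> umin umax \<delta> \<gamma> \<longleftrightarrow> Kinf \<gamma> \<and>
     (\<forall>x0 u0 u. u0 \<in> Udelta umin umax \<delta> \<and> continuous_on {0..} u \<longrightarrow>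
        (\<exists>x. x 0 = x0 \<and> plant_sol f u {0..} x) \<and>
        (\<forall>x. x 0 = x0 \<and> plant_sol f u {0..} x \<longrightarrow>
           Limsup at_top (\<lambda>t. ereal (norm (x t - \<Xi> u0)))
             \<le> ext_gamma \<gamma> (Limsup at_top (\<lambda>t. ereal \<bar>u t - u0\<bar>))))"

definition sat :: "real \<Rightarrow> real \<Rightarrow> real \<Rightarrow> real \<Rightarrow> real" where
  "sat umin umax uI w = (if uI \<le> umin then max w 0 else if uI < umax then w else min w 0)"

text \<open>Closed-loop trajectory (x, uI) on [0,\<infinity>): x is a classical solution, and uI is a
Caratheodory (integral) solution of the saturating integrator driven by w = k (r - g x).\<close>
definition closed_loop_sol :: "('a::real_normed_vector \<Rightarrow> real \<Rightarrow> 'a) \<Rightarrow> ('a \<Rightarrow> real) \<Rightarrow> real \<Rightarrow> real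
    \<Rightarrow> real \<Rightarrow> real \<Rightarrow> real \<Rightarrow> (real \<Rightarrow> 'a) \<Rightarrow> (real \<Rightarrow> real) \<Rightarrow> bool" where
  "closed_loop_sol f g umin umax k \<tau>p r x uI \<longleftrightarrow>
     plant_sol f (\<lambda>t. uI t + \<tau>p * k * (r - g (x t))) {0..} x \<and>
     (\<forall>t\<ge>0. ((\<lambda>s. sat umin umax (uI s) (k * (r - g (x s)))) has_integral (uI t - uI 0)) {0..t})"

text \<open>u_r = G^{-1}(r) for r in Y, where G = g o Xi.\<close>
definition u_ref :: "('a \<Rightarrow> real) \<Rightarrow> (real \<Rightarrow> 'a) \<Rightarrow> real \<Rightarrow> real \<Rightarrow> real \<Rightarrow> real" where
  "u_ref g \<Xi> umin umax r = (THE u. u \<in> {umin..umax} \<and> g (\<Xi> u) = r)"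

end

theory Submission
  imports Defs
begin

text \<open>For small gains the integrator is slow compared with the plant, so the closed loop is
  compared, by a Gronwall-type estimate, with solutions of the plant under frozen input. During a
  transient phase [0, T1] this brings the state within \<open>\<epsilon>0\<close> of the equilibrium curve
  \<open>\<Xi>\<close>. Afterwards, on consecutive windows of length S, exponential stability of the frozen
  plant shrinks the distance \<open>xe = \<parallel>x - \<Xi>(uI)\<parallel>\<close> by a factor 4 up to errors of order k,
  while the monotonicity of \<open>G = g \<circ> \<Xi>\<close> makes the saturated integrator drive uI towards
  \<open>ur\<close>. The weighted sum \<open>V = \<bar>uI - ur\<bar> + \<beta> xe\<close> then contracts by a fixed factor
  \<open>\<rho> < 1\<close> per window, which gives exponential convergence.\<close>

section \<open>Comparison of solutions\<close>

lemma pos_on_Icc_unless_first_zero: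
  fixes h :: "real \<Rightarrow> real"
  assumes cont: "continuous_on {0..S} h" and h0: "h 0 > 0"
    and no_first_zero: "\<And>\<tau>. 0 < \<tau> \<Longrightarrow> \<tau> \<le> S \<Longrightarrow> \<forall>s\<in>{0..<\<tau>}. h s > 0 \<Longrightarrow> h \<tau> = 0 \<Longrightarrow> False"
  shows "\<forall>t\<in>{0..S}. h t > 0"
proof (rule ccontr)
  assume "\<not> ?thesis"
  then obtain t1 where t1: "t1 \<in> {0..S}" "h t1 \<le> 0" by force
  define Z where "Z = {t \<in> {0..t1}. h t \<le> 0}"
  have "continuous_on {0..t1} h" using cont t1 by (auto intro: continuous_on_subset)
  then have "closed Z" unfolding Z_def
    using continuous_on_closed_Collect_le[OF _ continuous_on_const closed_atLeastAtMost] by blast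
  moreover have "t1 \<in> Z" "bdd_below Z" using t1 by (auto simp: Z_def bdd_below_def)
  ultimately have "Inf Z \<in> Z" using closed_contains_Inf by blast
  define \<tau> where "\<tau> = Inf Z"
  have \<tau>: "0 \<le> \<tau>" "\<tau> \<le> t1" "h \<tau> \<le> 0" using \<open>Inf Z \<in> Z\<close> by (auto simp: Z_def \<tau>_def)
  have before: "\<forall>s\<in>{0..<\<tau>}. h s > 0"
    using cInf_lower[OF _ \<open>bdd_below Z\<close>] \<tau> unfolding \<tau>_def[symmetric] by (force simp: Z_def)
  have "0 < \<tau>" using \<tau> h0 by (cases "\<tau> = 0") auto
  have "continuous_on {0..\<tau>} h" using cont \<tau> t1 by (auto intro: continuous_on_subset)
  then obtain s where s: "0 \<le> s" "s \<le> \<tau>" "h s = 0"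
    using IVT2'[of h \<tau> 0 0] \<tau> h0 by force
  with before have "s = \<tau>" by (cases "s < \<tau>") force+
  with no_first_zero[OF \<open>0 < \<tau>\<close> _ before] s \<tau> t1 show False by auto
qed

lemma norm_not_reaching_faster_barrier:
  fixes d :: "real \<Rightarrow> 'a::real_normed_vector" and B :: "real \<Rightarrow> real"
  assumes dd: "(d has_vector_derivative D) (at \<tau> within {0..S})"
    and dB: "(B has_real_derivative B') (at \<tau> within {0..S})"
    and \<tau>: "0 < \<tau>" "\<tau> \<le> S"
    and below: "\<forall>s\<in>{0..<\<tau>}. norm (d s) < B s" and touch: "norm (d \<tau>) = B \<tau>"
    and faster: "norm D < B'"
  shows False
proof -
  define c where "c = (B' - norm D) / 4"
  have "c > 0" using faster by (simp add: c_def)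
  obtain r1 where r1: "r1 > 0" "\<forall>s\<in>{0..S}. norm (s - \<tau>) < r1 \<longrightarrow>
      norm (d s - d \<tau> - (s - \<tau>) *\<^sub>R D) \<le> c * norm (s - \<tau>)"
    using dd \<open>c > 0\<close> unfolding has_vector_derivative_def has_derivative_within_alt by blast
  obtain r2 where r2: "r2 > 0" "\<forall>s\<in>{0..S}. norm (s - \<tau>) < r2 \<longrightarrow>
      norm (B s - B \<tau> - (s - \<tau>) *\<^sub>R B') \<le> c * norm (s - \<tau>)"
    using dB \<open>c > 0\<close>
    unfolding has_real_derivative_iff_has_vector_derivative has_vector_derivative_def
      has_derivative_within_alt by blast
  define h where "h = min (min r1 r2) \<tau> / 2"
  have h: "0 < h" "h < r1" "h < r2" "h \<le> \<tau>" using r1 r2 \<tau> by (auto simp: h_def)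
  define s where "s = \<tau> - h"
  have s: "s \<in> {0..S}" "s \<in> {0..<\<tau>}" "norm (s - \<tau>) = h" using h \<tau> by (auto simp: s_def)
  have "norm (d s - d \<tau> - (s - \<tau>) *\<^sub>R D) \<le> c * h" using r1(2) s h by metis
  moreover have "norm (d \<tau>) - norm (d s) \<le> norm (d s - d \<tau>)"
    using norm_triangle_ineq2[of "d \<tau>" "d s"] norm_minus_commute[of "d \<tau>" "d s"] by linarith
  moreover have "norm (d s - d \<tau>) \<le> norm (d s - d \<tau> - (s - \<tau>) *\<^sub>R D) + h * norm D"
    using norm_triangle_ineq[of "d s - d \<tau> - (s - \<tau>) *\<^sub>R D" "(s - \<tau>) *\<^sub>R D"] s(3) by simp
  ultimately have "norm (d \<tau>) - norm (d s) \<le> c * h + h * norm D" by linarith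
  moreover have "norm (B s - B \<tau> - (s - \<tau>) *\<^sub>R B') \<le> c * h" using r2(2) s h by metis
  then have "B \<tau> - B s \<ge> h * B' - c * h" using s(3) by (simp add: s_def abs_le_iff)
  moreover have "norm (d s) < B s" using below s by blast
  ultimately have "h * (B' - norm D) < h * (2 * c)" using touch by (simp add: algebra_simps)
  then show False using h \<open>c > 0\<close> by (simp add: c_def)
qed

lemma plant_sol_subset: "plant_sol f u I x \<Longrightarrow> J \<subseteq> I \<Longrightarrow> plant_sol f u J x"
  unfolding plant_sol_def by (meson has_vector_derivative_within_subset subsetD)

lemma plant_sol_continuous_on: "plant_sol f u I x \<Longrightarrow> continuous_on I x"
  unfolding plant_sol_def continuous_on_eq_continuous_within
  by (auto dest: has_vector_derivative_continuous)

lemma plant_sol_shift: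
  assumes "plant_sol f u {0..} x" "0 \<le> t0"
  shows "plant_sol f (\<lambda>s. u (t0 + s)) {0..} (\<lambda>s. x (t0 + s))"
  unfolding plant_sol_def
proof
  fix s :: real assume s: "s \<in> {0..}"
  have "(x has_vector_derivative f (x (t0 + s)) (u (t0 + s))) (at (t0 + s) within {0..})"
    using assms s unfolding plant_sol_def by auto
  then have "(x has_vector_derivative f (x (t0 + s)) (u (t0 + s))) (at (t0 + s) within (+) t0 ` {0..})"
    by (rule has_vector_derivative_within_subset) (use assms in auto)
  moreover have "((+) t0 has_vector_derivative 1) (at s within {0..})"
    by (auto intro!: derivative_eq_intros)
  ultimately show "((\<lambda>s. x (t0 + s)) has_vector_derivative f (x (t0 + s)) (u (t0 + s))) (at s within {0..})"
    using vector_diff_chain_within[of "(+) t0" 1 s "{0..}" x] by (simp add: o_def)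
qed

lemma plant_sol_deviation_strict:
  fixes y \<xi> :: "real \<Rightarrow> 'a::real_normed_vector"
  assumes L: "0 < L" and \<eta>: "0 \<le> \<eta>" and \<epsilon>: "0 < \<epsilon>"
    and lip: "\<And>p q w1 w2. norm p \<le> R \<Longrightarrow> norm q \<le> R \<Longrightarrow> w1 \<in> W \<Longrightarrow> w2 \<in> W \<Longrightarrow>
        norm (F p w1 - F q w2) \<le> L * (norm (p - q) + \<bar>w1 - w2\<bar>)"
    and y: "plant_sol F u {0..S} y" and \<xi>: "plant_sol F v {0..S} \<xi>"
    and \<xi>_inside: "\<forall>t\<in>{0..S}. norm (\<xi> t) \<le> R - 1 \<and> v t \<in> W"
    and u_close: "\<forall>t\<in>{0..S}. (\<forall>s\<in>{0..t}. norm (y s) \<le> R) \<longrightarrow> \<bar>u t - v t\<bar> \<le> \<eta> \<and> u t \<in> W"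
    and y0: "norm (y 0 - \<xi> 0) \<le> d"
    and small: "(d + \<epsilon> + (L * \<eta> + \<epsilon>) * S) * exp (L * S) < 1"
  shows "\<forall>t\<in>{0..S}. norm (y t - \<xi> t) < (d + \<epsilon> + (L * \<eta> + \<epsilon>) * t) * exp (L * t)"
proof -
  define B where "B t = (d + \<epsilon> + (L * \<eta> + \<epsilon>) * t) * exp (L * t)" for t
  have B_lt_1: "B t < 1" if "t \<in> {0..S}" for t
  proof -
    have "0 \<le> d" using y0 norm_ge_zero order_trans by blast
    then have "B t \<le> (d + \<epsilon> + (L * \<eta> + \<epsilon>) * S) * exp (L * S)"
      unfolding B_def using that L \<eta> \<epsilon> by (intro mult_mono add_left_mono) auto
    then show ?thesis using small by simp
  qed
  have "\<forall>t\<in>{0..S}. B t - norm (y t - \<xi> t) > 0"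
  proof (rule pos_on_Icc_unless_first_zero)
    show "continuous_on {0..S} (\<lambda>t. B t - norm (y t - \<xi> t))"
      unfolding B_def
      by (intro continuous_intros plant_sol_continuous_on[OF y] plant_sol_continuous_on[OF \<xi>])
    show "B 0 - norm (y 0 - \<xi> 0) > 0" using y0 \<epsilon> by (simp add: B_def)
  next
    fix \<tau> assume \<tau>: "0 < \<tau>" "\<tau> \<le> S" and below: "\<forall>s\<in>{0..<\<tau>}. B s - norm (y s - \<xi> s) > 0"
      and touch: "B \<tau> - norm (y \<tau> - \<xi> \<tau>) = 0"
    have \<tau>S: "\<tau> \<in> {0..S}" using \<tau> by auto
    have y_inside: "\<forall>s\<in>{0..\<tau>}. norm (y s) \<le> R"
    proof
      fix s assume s: "s \<in> {0..\<tau>}"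
      then have "norm (y s - \<xi> s) \<le> B s" using below touch by (cases "s < \<tau>") force+
      moreover have "B s < 1" "norm (\<xi> s) \<le> R - 1" using B_lt_1 \<xi>_inside s \<tau> by auto
      ultimately show "norm (y s) \<le> R" using norm_triangle_sub[of "y s" "\<xi> s"] by linarith
    qed
    then have uv: "\<bar>u \<tau> - v \<tau>\<bar> \<le> \<eta>" "u \<tau> \<in> W" using u_close \<tau>S by auto
    define D where "D = F (y \<tau>) (u \<tau>) - F (\<xi> \<tau>) (v \<tau>)"
    have "norm (\<xi> \<tau>) \<le> R - 1" "v \<tau> \<in> W" using \<xi>_inside \<tau>S by auto
    moreover have "norm (y \<tau>) \<le> R" using y_inside \<tau> by auto
    ultimately have "norm (y \<tau>) \<le> R" "norm (\<xi> \<tau>) \<le> R" "v \<tau> \<in> W" by auto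
    then have "norm D \<le> L * (norm (y \<tau> - \<xi> \<tau>) + \<bar>u \<tau> - v \<tau>\<bar>)"
      unfolding D_def using lip uv(2) by blast
    also have "\<dots> \<le> L * B \<tau> + L * \<eta>" using uv touch L by (simp add: algebra_simps)
    also have "\<dots> < (L * \<eta> + \<epsilon>) * exp (L * \<tau>) + B \<tau> * L"
    proof -
      have "(L * \<eta> + \<epsilon>) * 1 \<le> (L * \<eta> + \<epsilon>) * exp (L * \<tau>)"
        using L \<eta> \<epsilon> \<tau> by (intro mult_left_mono) auto
      then show ?thesis using \<epsilon> by (simp add: algebra_simps)
    qed
    finally have faster: "norm D < (L * \<eta> + \<epsilon>) * exp (L * \<tau>) + B \<tau> * L" .
    show False
    proof (rule norm_not_reaching_faster_barrier[OF _ _ \<tau> _ _ faster])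
      show "((\<lambda>t. y t - \<xi> t) has_vector_derivative D) (at \<tau> within {0..S})"
        using y \<xi> \<tau>S unfolding plant_sol_def D_def by (intro has_vector_derivative_diff) auto
      show "(B has_real_derivative (L * \<eta> + \<epsilon>) * exp (L * \<tau>) + B \<tau> * L) (at \<tau> within {0..S})"
        unfolding B_def by (auto intro!: derivative_eq_intros)
      show "\<forall>s\<in>{0..<\<tau>}. norm (y s - \<xi> s) < B s" "norm (y \<tau> - \<xi> \<tau>) = B \<tau>"
        using below touch by auto
    qed
  qed
  then show ?thesis unfolding B_def by auto
qed

lemma plant_sol_deviation:
  fixes y \<xi> :: "real \<Rightarrow> 'a::real_normed_vector"
  assumes S: "0 \<le> S" and L: "0 < L" and \<eta>: "0 \<le> \<eta>"
    and lip: "\<And>p q w1 w2. norm p \<le> R \<Longrightarrow> norm q \<le> R \<Longrightarrow> w1 \<in> W \<Longrightarrow> w2 \<in> W \<Longrightarrow>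
        norm (F p w1 - F q w2) \<le> L * (norm (p - q) + \<bar>w1 - w2\<bar>)"
    and y: "plant_sol F u {0..S} y" and \<xi>: "plant_sol F v {0..S} \<xi>"
    and \<xi>_inside: "\<forall>t\<in>{0..S}. norm (\<xi> t) \<le> R - 1 \<and> v t \<in> W"
    and u_close: "\<forall>t\<in>{0..S}. (\<forall>s\<in>{0..t}. norm (y s) \<le> R) \<longrightarrow> \<bar>u t - v t\<bar> \<le> \<eta> \<and> u t \<in> W"
    and y0: "norm (y 0 - \<xi> 0) \<le> d"
    and small: "(d + L * \<eta> * S) * exp (L * S) < 1"
  shows "\<forall>t\<in>{0..S}. norm (y t - \<xi> t) \<le> (d + L * \<eta> * t) * exp (L * t) \<and> norm (y t) \<le> R"
proof
  fix t assume t: "t \<in> {0..S}"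
  define K where "K = (1 + S) * exp (L * S)"
  have "K > 0" using S by (simp add: K_def add_pos_nonneg)
  have "0 \<le> d" using y0 norm_ge_zero order_trans by blast
  have dev: "norm (y t - \<xi> t) \<le> (d + L * \<eta> * t) * exp (L * t)"
  proof (rule field_le_epsilon)
    fix e :: real assume "0 < e"
    define \<epsilon> where "\<epsilon> = min ((1 - (d + L * \<eta> * S) * exp (L * S)) / (2 * K)) (e / K)"
    have "\<epsilon> > 0" using small \<open>K > 0\<close> \<open>0 < e\<close> by (simp add: \<epsilon>_def)
    have K_bound: "\<epsilon> * ((1 + t) * exp (L * t)) \<le> \<epsilon> * K"
      unfolding K_def using t L \<open>\<epsilon> > 0\<close> by (intro mult_left_mono mult_mono) auto
    have "\<epsilon> \<le> (1 - (d + L * \<eta> * S) * exp (L * S)) / (2 * K)" "\<epsilon> \<le> e / K"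
      unfolding \<epsilon>_def by auto
    then have "\<epsilon> * K \<le> (1 - (d + L * \<eta> * S) * exp (L * S)) / 2" "\<epsilon> * K \<le> e"
      using \<open>K > 0\<close> by (simp_all add: field_simps)
    then have "(d + \<epsilon> + (L * \<eta> + \<epsilon>) * S) * exp (L * S) < 1"
      using small by (simp add: K_def algebra_simps)
    from plant_sol_deviation_strict[OF L \<eta> \<open>\<epsilon> > 0\<close> lip y \<xi> \<xi>_inside u_close y0 this] t
    have "norm (y t - \<xi> t) < (d + L * \<eta> * t) * exp (L * t) + \<epsilon> * ((1 + t) * exp (L * t))"
      by (auto simp: algebra_simps)
    also have "\<epsilon> * ((1 + t) * exp (L * t)) \<le> e" using K_bound \<open>\<epsilon> * K \<le> e\<close> by linarith
    finally show "norm (y t - \<xi> t) \<le> (d + L * \<eta> * t) * exp (L * t) + e" by simp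
  qed
  moreover have "(d + L * \<eta> * t) * exp (L * t) \<le> (d + L * \<eta> * S) * exp (L * S)"
    using t L \<eta> \<open>0 \<le> d\<close> by (intro mult_mono add_left_mono mult_left_mono) auto
  moreover have "norm (\<xi> t) \<le> R - 1" using \<xi>_inside t by blast
  ultimately show "norm (y t - \<xi> t) \<le> (d + L * \<eta> * t) * exp (L * t) \<and> norm (y t) \<le> R"
    using small norm_triangle_sub[of "y t" "\<xi> t"] by linarith
qed

section \<open>The saturating integrator\<close>

lemma abs_sat_le: "\<bar>sat umin umax v w\<bar> \<le> \<bar>w\<bar>"
  unfolding sat_def by auto

lemma sat_nonpos: "umin < umax \<Longrightarrow> umax \<le> v \<Longrightarrow> sat umin umax v w \<le> 0"
  unfolding sat_def by auto

lemma sat_nonneg: "umin < umax \<Longrightarrow> v \<le> umin \<Longrightarrow> sat umin umax v w \<ge> 0"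
  unfolding sat_def by auto

lemma sat_le: "umin < umax \<Longrightarrow> (v \<le> umin \<Longrightarrow> 0 \<le> c) \<Longrightarrow> w \<le> c \<Longrightarrow> sat umin umax v w \<le> c"
  unfolding sat_def by auto

lemma sat_ge: "umin < umax \<Longrightarrow> (umax \<le> v \<Longrightarrow> c \<le> 0) \<Longrightarrow> c \<le> w \<Longrightarrow> c \<le> sat umin umax v w"
  unfolding sat_def by auto

locale indefinite_integral =
  fixes \<sigma> uI :: "real \<Rightarrow> real"
  assumes has_integral_from_0: "\<forall>t\<ge>0. (\<sigma> has_integral (uI t - uI 0)) {0..t}"
begin

lemma has_integral_increment:
  assumes "0 \<le> s" "s \<le> t"
  shows "(\<sigma> has_integral (uI t - uI s)) {s..t}"
proof -
  have it: "(\<sigma> has_integral (uI t - uI 0)) {0..t}" and is0: "(\<sigma> has_integral (uI s - uI 0)) {0..s}"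
    using has_integral_from_0 assms by auto
  then have int: "\<sigma> integrable_on {0..t}" by blast
  have "integral {0..s} \<sigma> + integral {s..t} \<sigma> = integral {0..t} \<sigma>"
    by (rule Henstock_Kurzweil_Integration.integral_combine[OF assms int])
  then have "integral {s..t} \<sigma> = uI t - uI s"
    using integral_unique[OF it] integral_unique[OF is0] by simp
  moreover have "\<sigma> integrable_on {s..t}"
    by (rule integrable_subinterval_real[OF int]) (use assms in auto)
  ultimately show ?thesis by (metis has_integral_integral)
qed

lemma abs_increment_le:
  assumes "0 \<le> s" "s \<le> t" "0 \<le> B" "\<And>\<tau>. \<tau> \<in> {s..t} \<Longrightarrow> \<bar>\<sigma> \<tau>\<bar> \<le> B"
  shows "\<bar>uI t - uI s\<bar> \<le> B * (t - s)"
proof -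
  have "norm (uI t - uI s) \<le> B * Henstock_Kurzweil_Integration.content (cbox s t)"
    by (rule has_integral_bound[OF assms(3)]) (use has_integral_increment[OF assms(1,2)] assms(4) in auto)
  then show ?thesis using assms by simp
qed

lemma continuous_on_Icc: "0 \<le> s \<Longrightarrow> continuous_on {s..t} uI"
proof (cases "s \<le> t")
  case True
  assume "0 \<le> s"
  have "(\<sigma> has_integral (uI t - uI 0)) {0..t}" using has_integral_from_0 \<open>0 \<le> s\<close> True by auto
  then have "\<sigma> integrable_on {0..t}" by blast
  then have "continuous_on {0..t} (\<lambda>t. uI 0 + integral {0..t} \<sigma>)"
    by (intro continuous_intros indefinite_integral_continuous_1)
  moreover have "uI 0 + integral {0..\<tau>} \<sigma> = uI \<tau>" if "\<tau> \<in> {0..t}" for \<tau>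
    using has_integral_from_0 that by (auto simp: integral_unique)
  ultimately have "continuous_on {0..t} uI" by (metis (no_types, lifting) continuous_on_cong)
  then show ?thesis by (rule continuous_on_subset) (use \<open>0 \<le> s\<close> in auto)
qed simp

lemma le_if_integrand_nonpos_above:
  assumes nonpos: "\<And>\<tau>. 0 \<le> \<tau> \<Longrightarrow> M \<le> uI \<tau> \<Longrightarrow> \<sigma> \<tau> \<le> 0" and "uI 0 \<le> M" "0 \<le> t"
  shows "uI t \<le> M"
proof (rule ccontr)
  assume above: "\<not> uI t \<le> M"
  define Z where "Z = {s \<in> {0..t}. uI s \<le> M}"
  have "closed Z" unfolding Z_def
    by (rule continuous_on_closed_Collect_le[OF continuous_on_Icc continuous_on_const closed_atLeastAtMost]) simp
  moreover have "0 \<in> Z" "bdd_above Z" using assms by (auto simp: Z_def bdd_above_def)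
  ultimately have "Sup Z \<in> Z" using closed_contains_Sup by blast
  define t0 where "t0 = Sup Z"
  have last: "s \<le> t0" if "s \<in> Z" for s
    unfolding t0_def using \<open>bdd_above Z\<close> that by (simp add: cSup_upper)
  have t0: "0 \<le> t0" "t0 \<le> t" "uI t0 \<le> M" using \<open>Sup Z \<in> Z\<close> by (auto simp: Z_def t0_def)
  have "continuous_on {t0..t} uI" using t0 by (intro continuous_on_Icc)
  then obtain s where s: "t0 \<le> s" "s \<le> t" "uI s = M"
    using IVT'[of uI t0 M t] t0 above by force
  then have "s \<in> Z" using t0 by (auto simp: Z_def)
  then have "s = t0" using last s by force
  have after: "M \<le> uI \<tau>" if "\<tau> \<in> {t0..t}" for \<tau>
  proof (cases "\<tau> = t0")
    case False
    then have "\<tau> \<notin> Z" using last that by force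
    then show ?thesis using that t0 by (auto simp: Z_def)
  qed (use s \<open>s = t0\<close> in simp)
  have "uI t - uI t0 \<le> 0"
    by (rule has_integral_le[OF has_integral_increment[OF t0(1,2)] has_integral_0])
      (use after nonpos t0 in auto)
  with s \<open>s = t0\<close> above show False by simp
qed

lemma ge_if_integrand_nonneg_below:
  assumes nonneg: "\<And>\<tau>. 0 \<le> \<tau> \<Longrightarrow> uI \<tau> \<le> M \<Longrightarrow> \<sigma> \<tau> \<ge> 0" and "M \<le> uI 0" "0 \<le> t"
  shows "M \<le> uI t"
proof -
  interpret neg: indefinite_integral "\<lambda>s. - \<sigma> s" "\<lambda>s. - uI s"
  proof
    show "\<forall>t\<ge>0. ((\<lambda>s. - \<sigma> s) has_integral (- uI t - - uI 0)) {0..t}"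
    proof (intro allI impI)
      fix t :: real assume "0 \<le> t"
      then have "(\<sigma> has_integral (uI t - uI 0)) {0..t}" using has_integral_from_0 by auto
      from has_integral_neg[OF this] show "((\<lambda>s. - \<sigma> s) has_integral (- uI t - - uI 0)) {0..t}"
        by simp
    qed
  qed
  have "- uI t \<le> - M"
    by (rule neg.le_if_integrand_nonpos_above) (use assms in auto)
  then show ?thesis by simp
qed

end

section \<open>Regularity and decay estimates\<close>

lemma C2_map_imp_C1_map: "C2_map F \<Longrightarrow> C1_map F"
proof -
  assume "C2_map F"
  then obtain F' where F': "\<And>z. (F has_derivative blinfun_apply (F' z)) (at z)" and "C1_map F'"
    unfolding C2_map_def by blast
  then obtain F'' where "\<And>z. (F' has_derivative blinfun_apply (F'' z)) (at z)"
    unfolding C1_map_def by blast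
  then have "continuous_on UNIV F'"
    unfolding continuous_on_eq_continuous_within
    using has_derivative_continuous has_derivative_at_withinI by blast
  with F' show "C1_map F" unfolding C1_map_def by blast
qed

lemma C1_map_lipschitz_on_bounded:
  fixes f :: "'a::euclidean_space \<Rightarrow> real \<Rightarrow> 'a"
  assumes "C1_map (\<lambda>p. f (fst p) (snd p))"
  shows "\<exists>L>0. \<forall>p q w1 w2. norm p \<le> R \<longrightarrow> norm q \<le> R \<longrightarrow> w1 \<in> {\<alpha>..\<beta>} \<longrightarrow> w2 \<in> {\<alpha>..\<beta>} \<longrightarrow>
      norm (f p w1 - f q w2) \<le> L * (norm (p - q) + \<bar>w1 - w2\<bar>)"
proof -
  obtain F' where F': "\<And>z. ((\<lambda>p. f (fst p) (snd p)) has_derivative blinfun_apply (F' z)) (at z)"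
    and "continuous_on UNIV F'"
    using assms unfolding C1_map_def by blast
  define K where "K = cball (0::'a) R \<times> {\<alpha>..\<beta>}"
  have "compact K" "convex K" unfolding K_def by (auto intro: compact_Times convex_Times)
  then have "compact (F' ` K)"
    by (intro compact_continuous_image continuous_on_subset[OF \<open>continuous_on UNIV F'\<close>]) auto
  then obtain B where B: "\<And>z. z \<in> K \<Longrightarrow> norm (F' z) \<le> B"
    using compact_imp_bounded[of "F' ` K"] unfolding bounded_iff by auto
  define L where "L = max B 1"
  have "norm (f p w1 - f q w2) \<le> L * (norm (p - q) + \<bar>w1 - w2\<bar>)"
    if "norm p \<le> R" "norm q \<le> R" "w1 \<in> {\<alpha>..\<beta>}" "w2 \<in> {\<alpha>..\<beta>}" for p q w1 w2
  proof -
    have "(p, w1) \<in> K" "(q, w2) \<in> K" using that by (auto simp: K_def)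
    have "norm ((\<lambda>p. f (fst p) (snd p)) (p, w1) - (\<lambda>p. f (fst p) (snd p)) (q, w2))
        \<le> L * norm ((p, w1) - (q, w2))"
    proof (rule differentiable_bound[OF \<open>convex K\<close> _ _ \<open>(p, w1) \<in> K\<close> \<open>(q, w2) \<in> K\<close>])
      show "((\<lambda>p. f (fst p) (snd p)) has_derivative blinfun_apply (F' z)) (at z within K)" for z
        using F' has_derivative_at_withinI by blast
      show "onorm (blinfun_apply (F' z)) \<le> L" if "z \<in> K" for z
        using B[OF that] unfolding L_def by (metis max.coboundedI1 norm_blinfun.rep_eq)
    qed
    then have "norm (f p w1 - f q w2) \<le> L * norm ((p, w1) - (q, w2))" by simp
    also have "\<dots> \<le> L * (norm (p - q) + \<bar>w1 - w2\<bar>)"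
      using norm_Pair_le[of "p - q" "w1 - w2"] unfolding L_def by (intro mult_left_mono) auto
    finally show ?thesis .
  qed
  then show ?thesis by (intro exI[of _ L]) (auto simp: L_def)
qed

lemma loc_lipschitz_lipschitz_on_cball:
  fixes g :: "'a::euclidean_space \<Rightarrow> real"
  assumes "loc_lipschitz g"
  shows "\<exists>L>0. L-lipschitz_on (cball 0 R) g"
proof -
  have "local_lipschitz {0::real} (cball 0 R) (\<lambda>_. g)"
  proof (rule local_lipschitzI)
    fix t x assume "x \<in> cball (0::'a) R"
    obtain r L where "r > 0" "L-lipschitz_on (cball x r) g"
      using assms unfolding loc_lipschitz_def by blast
    then show "\<exists>u>0. \<exists>L. \<forall>t\<in>cball t u \<inter> {0}. L-lipschitz_on (cball x u \<inter> cball 0 R) g"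
      by (intro exI[of _ r] conjI exI[of _ L]) (auto intro: lipschitz_on_subset)
  qed
  then obtain L where "\<And>t. t \<in> {0::real} \<Longrightarrow> L-lipschitz_on (cball 0 R) g"
    by (rule local_lipschitz_compact_implies_lipschitz) auto
  then have "L-lipschitz_on (cball 0 R) g" by blast
  then have "(max L 1)-lipschitz_on (cball 0 R) g" by (rule lipschitz_on_mono) auto
  then show ?thesis by (intro exI[of _ "max L 1"]) auto
qed

lemma C1_on_continuous_on: "C1_on S h \<Longrightarrow> continuous_on S h"
  unfolding C1_on_def continuous_on_eq_continuous_within
  by (auto dest: has_vector_derivative_continuous)

lemma C1_on_lipschitz_on_Icc:
  fixes \<Xi> :: "real \<Rightarrow> 'a::real_normed_vector"
  assumes "C1_on {a..b} \<Xi>"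
  shows "\<exists>L>0. \<forall>u\<in>{a..b}. \<forall>v\<in>{a..b}. norm (\<Xi> u - \<Xi> v) \<le> L * \<bar>u - v\<bar>"
proof -
  obtain D where D: "\<And>u. u \<in> {a..b} \<Longrightarrow> (\<Xi> has_vector_derivative D u) (at u within {a..b})"
    and "continuous_on {a..b} D"
    using assms unfolding C1_on_def by blast
  then have "compact (D ` {a..b})" by (intro compact_continuous_image) auto
  then obtain B where B: "\<And>u. u \<in> {a..b} \<Longrightarrow> norm (D u) \<le> B"
    using compact_imp_bounded[of "D ` {a..b}"] unfolding bounded_iff by (metis imageI)
  define L where "L = max B 1"
  have "norm (\<Xi> u - \<Xi> v) \<le> L * norm (u - v)" if "u \<in> {a..b}" "v \<in> {a..b}" for u v
  proof (rule differentiable_bound[of "{a..b}" _ "\<lambda>u h. h *\<^sub>R D u"])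
    show "(\<Xi> has_derivative (\<lambda>h. h *\<^sub>R D x)) (at x within {a..b})" if "x \<in> {a..b}" for x
      using D[OF that] unfolding has_vector_derivative_def .
    show "onorm (\<lambda>h. h *\<^sub>R D x) \<le> L" if "x \<in> {a..b}" for x
      using B[OF that] onorm_scaleR_left[OF bounded_linear_ident, of "D x"] by (simp add: onorm_id L_def)
  qed (use that in auto)
  then show ?thesis by (intro exI[of _ L]) (auto simp: L_def)
qed

lemma tendsto_of_exponential_bound:
  fixes h :: "real \<Rightarrow> 'b::real_normed_vector"
  assumes "\<nu> > 0" "\<forall>t\<ge>0. norm (h t - c) \<le> M * exp (- \<nu> * t)"
  shows "(h \<longlongrightarrow> c) at_top"
proof (rule LIM_zero_cancel, rule Lim_null_comparison)
  show "\<forall>\<^sub>F t in at_top. norm (h t - c) \<le> M * exp (- \<nu> * t)"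
    using eventually_ge_at_top[of "0::real"] by eventually_elim (use assms(2) in auto)
  have "filterlim (\<lambda>t. - \<nu> * t) at_bot at_top"
    by (rule filterlim_tendsto_neg_mult_at_bot[OF tendsto_const]) (use assms(1) in \<open>auto intro: filterlim_ident\<close>)
  then show "((\<lambda>t. M * exp (- \<nu> * t)) \<longlongrightarrow> 0) at_top"
    by (intro tendsto_mult_right_zero filterlim_compose[OF exp_at_bot])
qed

lemma power_le_exp_decay:
  fixes \<rho> S :: real
  assumes "0 < \<rho>" "\<rho> < 1" "0 < S" "t < c + real n * S + S"
  shows "\<rho> ^ n \<le> exp ((- ln \<rho> / S) * (c + S)) * exp (- (- ln \<rho> / S) * t)"
proof -
  define \<nu> where "\<nu> = - ln \<rho> / S"
  have "\<nu> > 0" unfolding \<nu>_def using ln_less_zero[OF assms(1,2)] assms(3) by (simp add: divide_neg_pos)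
  have "\<rho> ^ n = exp (real n * ln \<rho>)" using assms(1) by (simp add: exp_of_nat_mult)
  also have "real n * ln \<rho> = - \<nu> * (real n * S)" unfolding \<nu>_def using assms(3) by simp
  also have "- \<nu> * (real n * S) \<le> - \<nu> * (t - c - S)"
    using assms(4) \<open>\<nu> > 0\<close> by (intro mult_left_mono_neg) auto
  also have "exp (- \<nu> * (t - c - S)) = exp (\<nu> * (c + S)) * exp (- \<nu> * t)"
    by (simp add: exp_add[symmetric] algebra_simps)
  finally show ?thesis unfolding \<nu>_def by simp
qed

lemma mult_less_if_less_divide_succ:
  fixes k P Q :: real
  assumes "0 \<le> P" "0 < k" "k < Q / (P + 1)"
  shows "k * P < Q"
proof -
  have "k * P \<le> k * (P + 1)" using assms(2) by simp
  also have "\<dots> < Q / (P + 1) * (P + 1)" using assms by (intro mult_strict_right_mono) auto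
  also have "\<dots> = Q" using assms(1) by simp
  finally show ?thesis .
qed

section \<open>The plant under frozen input\<close>

locale plant_setting =
  fixes f :: "'a::euclidean_space \<Rightarrow> real \<Rightarrow> 'a" and g :: "'a \<Rightarrow> real"
    and \<Xi> :: "real \<Rightarrow> 'a" and \<gamma> :: "real \<Rightarrow> real"
    and umin umax \<delta> \<epsilon>0 lam m \<mu> \<tau>p T :: real
    and XT :: "('a \<times> real) set" and a b :: real
  assumes umin_less_umax: "umin < umax"
    and f_C1: "C1_map (\<lambda>p. f (fst p) (snd p))"
    and g_loc_lipschitz: "loc_lipschitz g"
    and A2: "A2 f g \<Xi> umin umax \<delta> \<epsilon>0 lam m \<mu>"
    and A3: "A3 f \<Xi> umin umax \<delta> \<gamma>"
    and \<tau>p_nonneg: "\<tau>p \<ge> 0"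
    and T_pos: "T > 0"
    and XT_compact: "compact XT"
    and XT_subset: "XT \<subseteq> UNIV \<times> Udelta umin umax \<delta>"
    and XT_reaches: "\<forall>(x0, u0)\<in>XT. (\<exists>x. x 0 = x0 \<and> plant_sol f (\<lambda>_. u0) {0..T} x) \<and>
           (\<forall>x. x 0 = x0 \<and> plant_sol f (\<lambda>_. u0) {0..T} x \<longrightarrow> norm (x T - \<Xi> u0) \<le> \<epsilon>0)"
    and a_def: "a = umin - \<delta>" and b_def: "b = umax + \<delta>"
begin

lemma Udelta_eq: "Udelta umin umax \<delta> = {a..b}"
  unfolding Udelta_def a_def b_def by simp

lemma A1_constants_pos: "\<delta> > 0" "\<epsilon>0 > 0" "lam > 0" "m \<ge> 1" "\<mu> > 0"
  using A2 unfolding A2_def A1_def by auto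

lemma \<Xi>_C1: "C1_on {a..b} \<Xi>"
  using A2 unfolding A2_def A1_def Udelta_eq by auto

lemma a_b_order: "a < umin" "umax < b"
  using A1_constants_pos umin_less_umax unfolding a_def b_def by auto

lemma frozen_decay:
  assumes "v \<in> {a..b}" "0 \<le> S" "plant_sol f (\<lambda>_. v) {0..S} \<psi>" "norm (\<psi> 0 - \<Xi> v) \<le> \<epsilon>0"
  shows "\<forall>t\<in>{0..S}. norm (\<psi> t - \<Xi> v) \<le> m * exp (- lam * t) * norm (\<psi> 0 - \<Xi> v)"
  using A2 assms unfolding A2_def A1_def Udelta_eq by blast

lemma G_increasing:
  assumes "u \<in> {a..b}" "v \<in> {a..b}" "u \<le> v"
  shows "g (\<Xi> v) - g (\<Xi> u) \<ge> \<mu> * (v - u)"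
  using A2 assms unfolding A2_def Udelta_eq by (cases "u = v") auto

lemma frozen_sol_exists:
  assumes "v \<in> {a..b}"
  shows "\<exists>\<psi>. \<psi> 0 = x0 \<and> plant_sol f (\<lambda>_. v) {0..} \<psi>"
  using A3 assms unfolding A3_def Udelta_eq by (auto intro: continuous_on_const)

lemma XT_input: "p \<in> XT \<Longrightarrow> snd p \<in> {a..b}"
  using XT_subset Udelta_eq by auto

lemma frozen_sols_locally_bounded:
  assumes p: "p \<in> XT"
  shows "\<exists>\<rho>>0. \<exists>R. \<forall>q\<in>XT. dist p q < \<rho> \<longrightarrow> (\<forall>\<phi>. \<phi> 0 = fst q \<and> plant_sol f (\<lambda>_. snd q) {0..T} \<phi> \<longrightarrow>
      (\<forall>t\<in>{0..T}. norm (\<phi> t) \<le> R))"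
proof -
  obtain \<phi>p where \<phi>p: "\<phi>p 0 = fst p" "plant_sol f (\<lambda>_. snd p) {0..T} \<phi>p"
    using XT_reaches p by (cases p) auto
  have "compact (\<phi>p ` {0..T})"
    by (intro compact_continuous_image plant_sol_continuous_on[OF \<phi>p(2)]) auto
  then obtain B where B: "\<And>t. t \<in> {0..T} \<Longrightarrow> norm (\<phi>p t) \<le> B"
    using compact_imp_bounded[of "\<phi>p ` {0..T}"] unfolding bounded_iff by (metis imageI)
  obtain L where L: "L > 0" "\<forall>p q w1 w2. norm p \<le> B + 1 \<longrightarrow> norm q \<le> B + 1 \<longrightarrow> w1 \<in> {a..b} \<longrightarrow>
      w2 \<in> {a..b} \<longrightarrow> norm (f p w1 - f q w2) \<le> L * (norm (p - q) + \<bar>w1 - w2\<bar>)"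
    using C1_map_lipschitz_on_bounded[OF f_C1] by blast
  define \<rho> where "\<rho> = 1 / (2 * ((1 + L * T) * exp (L * T)))"
  have "(1 + L * T) * exp (L * T) > 0" using L T_pos by (simp add: add_pos_nonneg)
  then have "\<rho> > 0" and small: "(\<rho> + L * \<rho> * T) * exp (L * T) < 1"
    unfolding \<rho>_def by (simp_all add: field_simps)
  have "norm (\<phi> t) \<le> B + 1"
    if q: "q \<in> XT" "dist p q < \<rho>" and \<phi>: "\<phi> 0 = fst q" "plant_sol f (\<lambda>_. snd q) {0..T} \<phi>"
      and t: "t \<in> {0..T}" for q \<phi> t
  proof -
    have "norm (fst q - fst p) \<le> \<rho>" "\<bar>snd q - snd p\<bar> \<le> \<rho>"
      using dist_fst_le[of q p] dist_snd_le[of q p] q by (simp_all add: dist_norm norm_minus_commute)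
    with plant_sol_deviation[where W="{a..b}", OF _ L(1) _ _ \<phi>(2) \<phi>p(2) _ _ _ small] L(2)
      B XT_input[OF p] XT_input[OF q(1)] \<phi>(1) \<phi>p(1) T_pos \<open>\<rho> > 0\<close> t
    show ?thesis by auto
  qed
  with \<open>\<rho> > 0\<close> show ?thesis by blast
qed

lemma frozen_sols_bounded:
  "\<exists>R0\<ge>0. \<forall>p\<in>XT. \<forall>\<phi>. \<phi> 0 = fst p \<and> plant_sol f (\<lambda>_. snd p) {0..T} \<phi> \<longrightarrow>
    (\<forall>t\<in>{0..T}. norm (\<phi> t) \<le> R0)"
proof -
  obtain \<rho> R where \<rho>: "\<And>p. p \<in> XT \<Longrightarrow> \<rho> p > 0"
    and R: "\<And>p q \<phi> t. p \<in> XT \<Longrightarrow> q \<in> XT \<Longrightarrow> dist p q < \<rho> p \<Longrightarrow> \<phi> 0 = fst q \<Longrightarrow>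
      plant_sol f (\<lambda>_. snd q) {0..T} \<phi> \<Longrightarrow> t \<in> {0..T} \<Longrightarrow> norm (\<phi> t) \<le> R p"
    using frozen_sols_locally_bounded by metis
  obtain C where C: "C \<subseteq> XT" "finite C" "XT \<subseteq> (\<Union>c\<in>C. ball c (\<rho> c))"
    using compactE_image[OF XT_compact, of XT "\<lambda>c. ball c (\<rho> c)"] \<rho> by force
  define R0 where "R0 = (\<Sum>c\<in>C. \<bar>R c\<bar>)"
  have "norm (\<phi> t) \<le> R0"
    if q: "q \<in> XT" "\<phi> 0 = fst q" "plant_sol f (\<lambda>_. snd q) {0..T} \<phi>" "t \<in> {0..T}" for q \<phi> t
  proof -
    obtain c where c: "c \<in> C" "dist c q < \<rho> c" using C q(1) by force
    then have "norm (\<phi> t) \<le> R c" using R C q by blast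
    also have "R c \<le> \<bar>R c\<bar>" by simp
    also have "\<dots> \<le> R0" unfolding R0_def using c C by (intro member_le_sum) auto
    finally show ?thesis .
  qed
  moreover have "R0 \<ge> 0" unfolding R0_def by (intro sum_nonneg) auto
  ultimately show ?thesis by blast
qed

end

section \<open>Constants and the gain bound\<close>

text \<open>S is the length of the windows on which the closed loop is compared with the plant under
  frozen input, and T1 the end of the transient phase. The c's are the constants of the resulting
  estimates: c_tr and c_win bound, per unit of gain, the deviation from the frozen solution, and c_Q
  bounds the tracking error by the integrator and state errors. \<open>\<beta>\<close> weights the Lyapunov function,
  and the gain bound collects the smallness conditions on k.\<close>

locale gain_constants = plant_setting +
  fixes LX XM S R0 Rs Lf Lg Gb :: real
  assumes LX: "LX > 0" "\<forall>u\<in>{a..b}. \<forall>v\<in>{a..b}. norm (\<Xi> u - \<Xi> v) \<le> LX * \<bar>u - v\<bar>"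
    and XM: "XM \<ge> 0" "\<forall>u\<in>{a..b}. norm (\<Xi> u) \<le> XM"
    and S: "S > 0" "m * exp (- lam * S) \<le> 1/4"
    and R0: "R0 \<ge> 0" "\<forall>p\<in>XT. \<forall>\<phi>. \<phi> 0 = fst p \<and> plant_sol f (\<lambda>_. snd p) {0..T} \<phi> \<longrightarrow>
      (\<forall>t\<in>{0..T}. norm (\<phi> t) \<le> R0)"
    and Rs: "Rs = R0 + XM + m * \<epsilon>0 + 1"
    and Lf: "Lf > 0" "\<forall>p q w1 w2. norm p \<le> Rs \<longrightarrow> norm q \<le> Rs \<longrightarrow> w1 \<in> {a-1..b+1} \<longrightarrow>
      w2 \<in> {a-1..b+1} \<longrightarrow> norm (f p w1 - f q w2) \<le> Lf * (norm (p - q) + \<bar>w1 - w2\<bar>)"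
    and Lg: "Lg > 0" "Lg-lipschitz_on (cball 0 Rs) g"
    and Gb: "Gb \<ge> 0" "\<forall>p\<in>cball 0 Rs. \<bar>g p\<bar> \<le> Gb"
begin

definition "T1 = T + S"
definition "c_tr = Lf * (T1 + \<tau>p) * (2 * Gb) * T1 * exp (Lf * T1)"
definition "c_win = Lf * (S + \<tau>p) * S * exp (Lf * S)"
definition "c_drift = c_win + LX * S"
definition "c_Q = 2 * (Lg * LX + Lg * m)"
definition "c_QQ = 2 * Lg * LX * S + Lg * c_win"
definition "c_quad = (\<mu> * S^2 + S * Lg * c_drift) * c_Q"
definition "c_cross = S * Lg * m + c_quad + 3 * S * c_Q"
definition "\<beta> = \<mu> * S / (4 * c_drift * c_Q)"

definition "gain_bounds = {1, 1 / (\<tau>p * (2 * Gb) + 1), 1 / (c_tr + 1),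
  (3 * \<epsilon>0 / 4) / (c_tr + LX * T1 * (2 * Gb) + 1), 1 / (c_win * (2 * Gb) + 1),
  (1/2) / (c_QQ + 1), (\<mu> * S / 2) / (c_quad + 1), 1 / (3 * S * c_Q + \<mu> * S / 2 + 1),
  (3 * \<epsilon>0 / 4) / (c_drift * c_Q * (b - a + \<epsilon>0) + 1),
  (3 * \<beta> / 4) / (c_cross + \<beta> * c_drift * c_Q + \<beta> * \<mu> * S / 4 + 1)}"

definition "gain_bound = Min gain_bounds"

lemma constants_pos: "T1 > 0" "c_tr \<ge> 0" "c_win \<ge> 0" "c_drift > 0" "c_Q > 0" "c_QQ \<ge> 0"
  "c_quad \<ge> 0" "c_cross \<ge> 0" "\<beta> > 0" "Rs \<ge> 1" "m > 0"
proof -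
  show T1: "T1 > 0" unfolding T1_def using T_pos S by simp
  show "c_tr \<ge> 0" unfolding c_tr_def using T1 Lf Gb \<tau>p_nonneg by simp
  show c_win: "c_win \<ge> 0" unfolding c_win_def using S Lf \<tau>p_nonneg by simp
  show c_drift: "c_drift > 0" unfolding c_drift_def using c_win LX S by (simp add: add_nonneg_pos)
  show m: "m > 0" using A1_constants_pos by simp
  show c_Q: "c_Q > 0" unfolding c_Q_def using LX Lg m by (simp add: add_pos_pos)
  show "c_QQ \<ge> 0" unfolding c_QQ_def using LX Lg S c_win by simp
  show c_quad: "c_quad \<ge> 0" unfolding c_quad_def using A1_constants_pos S Lg c_drift c_Q by simp
  show "c_cross \<ge> 0" unfolding c_cross_def using S Lg m c_quad c_Q by simp
  show "\<beta> > 0" unfolding \<beta>_def using A1_constants_pos S c_drift c_Q by simp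
  show "Rs \<ge> 1" unfolding Rs using R0 XM m A1_constants_pos by simp
qed

lemma gain_bound_pos: "gain_bound > 0"
proof -
  have "\<tau>p * (2 * Gb) \<ge> 0" "c_tr + LX * T1 * (2 * Gb) \<ge> 0" "c_win * (2 * Gb) \<ge> 0"
    "3 * S * c_Q + \<mu> * S / 2 \<ge> 0" "c_drift * c_Q * (b - a + \<epsilon>0) \<ge> 0"
    "c_cross + \<beta> * c_drift * c_Q + \<beta> * \<mu> * S / 4 \<ge> 0"
    using \<tau>p_nonneg Gb constants_pos LX S A1_constants_pos a_b_order umin_less_umax by auto
  then show ?thesis
    unfolding gain_bound_def gain_bounds_def using constants_pos S A1_constants_pos
    by (subst Min_gr_iff) (auto intro!: divide_pos_pos add_nonneg_pos)
qed

lemma norm_\<Xi>_le: "u \<in> {a..b} \<Longrightarrow> norm (\<Xi> u) \<le> Rs - 1"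
proof -
  assume "u \<in> {a..b}"
  then have "norm (\<Xi> u) \<le> XM" using XM(2) by blast
  moreover have "0 \<le> m * \<epsilon>0" using A1_constants_pos by simp
  ultimately show ?thesis using R0(1) unfolding Rs by linarith
qed

lemma frozen_window:
  assumes v: "v \<in> {a..b}" and \<psi>: "plant_sol f (\<lambda>_. v) {0..} \<psi>"
    and t0: "0 \<le> t0" and near: "norm (\<psi> t0 - \<Xi> v) \<le> \<epsilon>0"
  shows "\<forall>s\<in>{0..S}. norm (\<psi> (t0 + s) - \<Xi> v) \<le> m * norm (\<psi> t0 - \<Xi> v) \<and> norm (\<psi> (t0 + s)) \<le> Rs - 1"
    and "norm (\<psi> (t0 + S) - \<Xi> v) \<le> norm (\<psi> t0 - \<Xi> v) / 4"
proof -
  have "plant_sol f (\<lambda>_. v) {0..S} (\<lambda>s. \<psi> (t0 + s))"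
    using plant_sol_subset[OF plant_sol_shift[OF \<psi> t0]] by auto
  from frozen_decay[OF v _ this] S(1) near
  have decay: "norm (\<psi> (t0 + s) - \<Xi> v) \<le> m * exp (- lam * s) * norm (\<psi> t0 - \<Xi> v)"
    if "s \<in> {0..S}" for s
    using that by auto
  have "m * exp (- lam * s) \<le> m" if "0 \<le> s" for s
    using that A1_constants_pos by simp
  then have close: "norm (\<psi> (t0 + s) - \<Xi> v) \<le> m * norm (\<psi> t0 - \<Xi> v)" if "s \<in> {0..S}" for s
    using decay[OF that] that mult_right_mono[of "m * exp (- lam * s)" m "norm (\<psi> t0 - \<Xi> v)"]
    by fastforce
  show "\<forall>s\<in>{0..S}. norm (\<psi> (t0 + s) - \<Xi> v) \<le> m * norm (\<psi> t0 - \<Xi> v) \<and> norm (\<psi> (t0 + s)) \<le> Rs - 1"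
  proof
    fix s assume s: "s \<in> {0..S}"
    have "m * norm (\<psi> t0 - \<Xi> v) \<le> m * \<epsilon>0" using near A1_constants_pos by simp
    moreover have "norm (\<Xi> v) \<le> XM" using XM(2) v by blast
    ultimately have "norm (\<psi> (t0 + s)) \<le> Rs - 1"
      using close[OF s] norm_triangle_sub[of "\<psi> (t0 + s)" "\<Xi> v"] R0(1) unfolding Rs
      by (simp add: norm_minus_commute)
    with close[OF s] show "norm (\<psi> (t0 + s) - \<Xi> v) \<le> m * norm (\<psi> t0 - \<Xi> v) \<and> norm (\<psi> (t0 + s)) \<le> Rs - 1"
      by blast
  qed
  have "m * exp (- lam * S) * norm (\<psi> t0 - \<Xi> v) \<le> 1/4 * norm (\<psi> t0 - \<Xi> v)"
    using S(2) by (intro mult_right_mono) auto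
  with decay[of S] S(1) show "norm (\<psi> (t0 + S) - \<Xi> v) \<le> norm (\<psi> t0 - \<Xi> v) / 4" by auto
qed

end

section \<open>Closed-loop trajectories\<close>

locale closed_loop_trajectory = gain_constants +
  fixes k r :: real and x :: "real \<Rightarrow> 'a::euclidean_space" and uI :: "real \<Rightarrow> real"
  assumes k_pos: "0 < k" and k_less: "k < gain_bound"
    and r_range: "r \<in> {g (\<Xi> umin) .. g (\<Xi> umax)}"
    and init: "(x 0, uI 0) \<in> XT"
    and closed_loop: "closed_loop_sol f g umin umax k \<tau>p r x uI"
begin

lemma gain_less: "q \<in> gain_bounds \<Longrightarrow> k < q"
proof -
  assume "q \<in> gain_bounds"
  moreover have "finite gain_bounds" "gain_bounds \<noteq> {}" unfolding gain_bounds_def by auto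
  ultimately show "k < q" using k_less Min_gr_iff unfolding gain_bound_def by blast
qed

lemma gain_less_bound:
  assumes "0 \<le> P" "Q / (P + 1) \<in> gain_bounds"
  shows "k * P < Q"
  using mult_less_if_less_divide_succ[OF assms(1) k_pos gain_less[OF assms(2)]] .

lemma gain_le_1: "k \<le> 1"
  using gain_less[of 1] unfolding gain_bounds_def by simp

lemma gain_prop: "k * (\<tau>p * (2 * Gb)) \<le> 1"
proof -
  have "0 \<le> \<tau>p * (2 * Gb)" using \<tau>p_nonneg Gb by simp
  then show ?thesis using gain_less_bound unfolding gain_bounds_def by (meson insertI1 insertI2 less_imp_le)
qed

lemma gain_transient: "k * c_tr < 1" "k * (c_tr + LX * T1 * (2 * Gb)) \<le> 3 * \<epsilon>0 / 4"
proof -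
  show "k * c_tr < 1"
    using gain_less_bound constants_pos unfolding gain_bounds_def by (meson insertI1 insertI2)
  have "0 \<le> c_tr + LX * T1 * (2 * Gb)" using constants_pos LX Gb by simp
  then show "k * (c_tr + LX * T1 * (2 * Gb)) \<le> 3 * \<epsilon>0 / 4"
    using gain_less_bound unfolding gain_bounds_def by (meson insertI1 insertI2 less_imp_le)
qed

lemma gain_window: "k * (c_win * (2 * Gb)) < 1"
proof -
  have "0 \<le> c_win * (2 * Gb)" using constants_pos Gb by simp
  then show ?thesis using gain_less_bound unfolding gain_bounds_def by (meson insertI1 insertI2)
qed

lemma gain_Q: "k * c_QQ \<le> 1/2"
  using gain_less_bound constants_pos unfolding gain_bounds_def by (meson insertI1 insertI2 less_imp_le)

lemma gain_quad: "k * c_quad \<le> \<mu> * S / 2"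
  using gain_less_bound constants_pos unfolding gain_bounds_def by (meson insertI1 insertI2 less_imp_le)

lemma gain_contraction: "k * (3 * S * c_Q + \<mu> * S / 2) \<le> 1"
proof -
  have "0 \<le> 3 * S * c_Q + \<mu> * S / 2" using constants_pos S A1_constants_pos by simp
  then show ?thesis using gain_less_bound unfolding gain_bounds_def by (meson insertI1 insertI2 less_imp_le)
qed

lemma gain_window_error: "k * (c_drift * c_Q * (b - a + \<epsilon>0)) \<le> 3 * \<epsilon>0 / 4"
proof -
  have "0 \<le> c_drift * c_Q * (b - a + \<epsilon>0)"
    using constants_pos A1_constants_pos a_b_order umin_less_umax by simp
  then show ?thesis using gain_less_bound unfolding gain_bounds_def by (meson insertI1 insertI2 less_imp_le)
qed

lemma gain_lyapunov: "k * (c_cross + \<beta> * c_drift * c_Q + \<beta> * \<mu> * S / 4) \<le> 3 * \<beta> / 4"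
proof -
  have "0 \<le> c_cross + \<beta> * c_drift * c_Q + \<beta> * \<mu> * S / 4" using constants_pos S A1_constants_pos by simp
  then show ?thesis using gain_less_bound unfolding gain_bounds_def by (meson insertI1 insertI2 less_imp_le)
qed

definition "ur = u_ref g \<Xi> umin umax r"
definition "u_plant t = uI t + \<tau>p * k * (r - g (x t))"
definition "\<sigma> t = sat umin umax (uI t) (k * (r - g (x t)))"
definition "ue t = \<bar>uI t - ur\<bar>"
definition "xe t = norm (x t - \<Xi> (uI t))"

lemma g_lipschitz: "p \<in> cball 0 Rs \<Longrightarrow> q \<in> cball 0 Rs \<Longrightarrow> \<bar>g p - g q\<bar> \<le> Lg * norm (p - q)"
  using lipschitz_onD[OF Lg(2)] by (simp add: dist_norm)

lemma \<Xi>_in_cball: "u \<in> {a..b} \<Longrightarrow> \<Xi> u \<in> cball 0 Rs"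
  using norm_\<Xi>_le by fastforce

lemma ur_solves: "ur \<in> {umin..umax}" "g (\<Xi> ur) = r"
proof -
  have sub: "{umin..umax} \<subseteq> {a..b}" using a_b_order by auto
  have "continuous_on {umin..umax} \<Xi>"
    using continuous_on_subset[OF C1_on_continuous_on[OF \<Xi>_C1] sub] .
  moreover have "\<Xi> ` {umin..umax} \<subseteq> cball 0 Rs" using \<Xi>_in_cball sub by blast
  moreover have "continuous_on (cball 0 Rs) g" using Lg(2) by (rule lipschitz_on_continuous_on)
  ultimately have "continuous_on {umin..umax} (\<lambda>u. g (\<Xi> u))"
    using continuous_on_compose2 by blast
  then obtain u0 where u0: "u0 \<in> {umin..umax}" "g (\<Xi> u0) = r"
    using IVT'[of "\<lambda>u. g (\<Xi> u)" umin r umax] r_range umin_less_umax by auto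
  have "v = u0" if "v \<in> {umin..umax}" "g (\<Xi> v) = r" for v
    using G_increasing[of v u0] G_increasing[of u0 v] that u0 sub A1_constants_pos
    by (cases v u0 rule: linorder_cases) (auto simp: mult_le_0_iff)
  then have "ur = u0" unfolding ur_def u_ref_def using u0 by blast
  with u0 show "ur \<in> {umin..umax}" "g (\<Xi> ur) = r" by auto
qed

lemma ur_in_ab: "ur \<in> {a..b}"
  using ur_solves(1) a_b_order by auto

lemma x_plant_sol: "plant_sol f u_plant {0..} x"
  using closed_loop unfolding closed_loop_sol_def u_plant_def by blast

sublocale I: indefinite_integral \<sigma> uI
  using closed_loop unfolding closed_loop_sol_def \<sigma>_def by unfold_locales auto

lemma uI_in_ab: "0 \<le> t \<Longrightarrow> uI t \<in> {a..b}"
proof -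
  assume t: "0 \<le> t"
  have "uI 0 \<in> {a..b}" using XT_input[OF init] by simp
  moreover have "uI t \<le> max (uI 0) umax"
    by (rule I.le_if_integrand_nonpos_above[OF _ _ t]) (auto simp: \<sigma>_def intro!: sat_nonpos umin_less_umax)
  moreover have "min (uI 0) umin \<le> uI t"
    by (rule I.ge_if_integrand_nonneg_below[OF _ _ t]) (auto simp: \<sigma>_def intro!: sat_nonneg umin_less_umax)
  ultimately show ?thesis using a_b_order by auto
qed

lemma abs_r_minus_g_le: "p \<in> cball 0 Rs \<Longrightarrow> \<bar>r - g p\<bar> \<le> 2 * Gb"
proof -
  assume p: "p \<in> cball 0 Rs"
  have "\<bar>g (\<Xi> umin)\<bar> \<le> Gb" "\<bar>g (\<Xi> umax)\<bar> \<le> Gb"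
    using Gb(2) \<Xi>_in_cball a_b_order umin_less_umax by auto
  then have "\<bar>r\<bar> \<le> Gb" using r_range by auto
  moreover have "\<bar>g p\<bar> \<le> Gb" using Gb p by auto
  ultimately show ?thesis by simp
qed

lemma uI_increment_le:
  assumes "0 \<le> s" "s \<le> t" "0 \<le> Q" "\<And>\<tau>. \<tau> \<in> {s..t} \<Longrightarrow> \<bar>r - g (x \<tau>)\<bar> \<le> Q"
  shows "\<bar>uI t - uI s\<bar> \<le> k * Q * (t - s)"
proof (rule I.abs_increment_le[OF assms(1,2)])
  show "0 \<le> k * Q" using k_pos assms by simp
  fix \<tau> assume "\<tau> \<in> {s..t}"
  then have "k * \<bar>r - g (x \<tau>)\<bar> \<le> k * Q" using assms k_pos by (intro mult_left_mono) auto
  moreover have "\<bar>\<sigma> \<tau>\<bar> \<le> k * \<bar>r - g (x \<tau>)\<bar>"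
    using abs_sat_le[of umin umax "uI \<tau>" "k * (r - g (x \<tau>))"] k_pos by (simp add: \<sigma>_def abs_mult)
  ultimately show "\<bar>\<sigma> \<tau>\<bar> \<le> k * Q" by linarith
qed

lemma u_plant_bounds:
  assumes "0 \<le> s" "s \<le> t" "0 \<le> Q" "\<And>\<tau>. \<tau> \<in> {s..t} \<Longrightarrow> \<bar>r - g (x \<tau>)\<bar> \<le> Q"
  shows "\<bar>u_plant t - uI s\<bar> \<le> k * (t - s + \<tau>p) * Q" "\<bar>u_plant t - uI t\<bar> \<le> \<tau>p * k * Q"
proof -
  have "\<bar>\<tau>p * k * (r - g (x t))\<bar> = \<tau>p * k * \<bar>r - g (x t)\<bar>"
    using \<tau>p_nonneg k_pos by (simp add: abs_mult)
  also have "\<dots> \<le> \<tau>p * k * Q" using assms \<tau>p_nonneg k_pos by (intro mult_left_mono) auto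
  finally show "\<bar>u_plant t - uI t\<bar> \<le> \<tau>p * k * Q" unfolding u_plant_def by simp
  with uI_increment_le[OF assms] show "\<bar>u_plant t - uI s\<bar> \<le> k * (t - s + \<tau>p) * Q"
    unfolding u_plant_def by (simp add: algebra_simps)
qed

lemma u_plant_in_widened_range:
  assumes "0 \<le> t" "\<bar>u_plant t - uI t\<bar> \<le> \<tau>p * k * (2 * Gb)"
  shows "u_plant t \<in> {a-1..b+1}"
  using gain_prop uI_in_ab[OF assms(1)] assms(2) by (auto simp: mult_ac)

lemma closed_loop_deviation:
  assumes tn: "0 \<le> tn" and len: "0 \<le> len"
    and \<psi>: "plant_sol f (\<lambda>_. uI tn) {0..len} \<psi>" "\<psi> 0 = x tn" "\<forall>s\<in>{0..len}. norm (\<psi> s) \<le> Rs - 1"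
    and Q: "0 \<le> Q" "Q \<le> 2 * Gb"
    and error_le_Q: "\<forall>s\<in>{0..len}. norm (x (tn + s)) \<le> Rs \<longrightarrow> \<bar>r - g (x (tn + s))\<bar> \<le> Q"
    and small: "k * (Lf * (len + \<tau>p) * len * exp (Lf * len)) * Q < 1"
  shows "\<forall>s\<in>{0..len}. norm (x (tn + s) - \<psi> s) \<le> k * (Lf * (len + \<tau>p) * len * exp (Lf * len)) * Q
    \<and> norm (x (tn + s)) \<le> Rs"
proof -
  define \<eta> where "\<eta> = k * (len + \<tau>p) * Q"
  have "\<eta> \<ge> 0" using k_pos len \<tau>p_nonneg Q by (simp add: \<eta>_def)
  have dev: "\<forall>s\<in>{0..len}. norm (x (tn + s) - \<psi> s) \<le> (0 + Lf * \<eta> * s) * exp (Lf * s)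
      \<and> norm (x (tn + s)) \<le> Rs"
  proof (rule plant_sol_deviation[where W = "{a-1..b+1}", OF len Lf(1) \<open>\<eta> \<ge> 0\<close> _ _ \<psi>(1)])
    show "plant_sol f (\<lambda>s. u_plant (tn + s)) {0..len} (\<lambda>s. x (tn + s))"
      using plant_sol_subset[OF plant_sol_shift[OF x_plant_sol tn]] by auto
    show "\<forall>s\<in>{0..len}. norm (\<psi> s) \<le> Rs - 1 \<and> uI tn \<in> {a-1..b+1}"
      using \<psi>(3) uI_in_ab[OF tn] by auto
    show "norm (x (tn + 0) - \<psi> 0) \<le> 0" using \<psi>(2) by simp
    show "(0 + Lf * \<eta> * len) * exp (Lf * len) < 1" using small by (simp add: \<eta>_def mult_ac)
    show "\<forall>t\<in>{0..len}. (\<forall>s\<in>{0..t}. norm (x (tn + s)) \<le> Rs) \<longrightarrow>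
        \<bar>u_plant (tn + t) - uI tn\<bar> \<le> \<eta> \<and> u_plant (tn + t) \<in> {a-1..b+1}"
    proof (intro ballI impI)
      fix t assume t: "t \<in> {0..len}" and inside: "\<forall>s\<in>{0..t}. norm (x (tn + s)) \<le> Rs"
      have "\<bar>r - g (x \<tau>)\<bar> \<le> Q" if "\<tau> \<in> {tn..tn + t}" for \<tau>
      proof -
        have "\<tau> - tn \<in> {0..t}" "\<tau> - tn \<in> {0..len}" using that t by auto
        with error_le_Q inside show ?thesis by fastforce
      qed
      from u_plant_bounds[of tn "tn + t" Q, OF tn _ Q(1) this] t
      have "\<bar>u_plant (tn + t) - uI tn\<bar> \<le> k * (t + \<tau>p) * Q" "\<bar>u_plant (tn + t) - uI (tn + t)\<bar> \<le> \<tau>p * k * Q"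
        by auto
      moreover have "k * (t + \<tau>p) * Q \<le> \<eta>" using t k_pos Q unfolding \<eta>_def by (intro mult_right_mono) auto
      moreover have "\<tau>p * k * Q \<le> \<tau>p * k * (2 * Gb)" using Q \<tau>p_nonneg k_pos by (intro mult_left_mono) auto
      ultimately show "\<bar>u_plant (tn + t) - uI tn\<bar> \<le> \<eta> \<and> u_plant (tn + t) \<in> {a-1..b+1}"
        using u_plant_in_widened_range[of "tn + t"] tn t by auto
    qed
  qed (use Lf(2) in blast)
  show ?thesis
  proof
    fix s assume s: "s \<in> {0..len}"
    have "(0 + Lf * \<eta> * s) * exp (Lf * s) \<le> (0 + Lf * \<eta> * len) * exp (Lf * len)"
      using s Lf(1) \<open>\<eta> \<ge> 0\<close> by (intro mult_mono mult_left_mono add_left_mono) auto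
    also have "\<dots> = k * (Lf * (len + \<tau>p) * len * exp (Lf * len)) * Q" by (simp add: \<eta>_def mult_ac)
    finally show "norm (x (tn + s) - \<psi> s) \<le> k * (Lf * (len + \<tau>p) * len * exp (Lf * len)) * Q
      \<and> norm (x (tn + s)) \<le> Rs"
      using dev s by (meson order_trans)
  qed
qed

lemma frozen_transient:
  obtains \<psi> where "plant_sol f (\<lambda>_. uI 0) {0..} \<psi>" "\<psi> 0 = x 0"
    "\<forall>t\<in>{0..T1}. norm (\<psi> t) \<le> Rs - 1" "norm (\<psi> T1 - \<Xi> (uI 0)) \<le> \<epsilon>0 / 4"
proof -
  have u0: "uI 0 \<in> {a..b}" using uI_in_ab by simp
  obtain \<psi> where \<psi>: "\<psi> 0 = x 0" "plant_sol f (\<lambda>_. uI 0) {0..} \<psi>"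
    using frozen_sol_exists[OF u0] by blast
  have \<psi>T: "plant_sol f (\<lambda>_. uI 0) {0..T} \<psi>" by (rule plant_sol_subset[OF \<psi>(2)]) auto
  have "norm (\<psi> T - \<Xi> (uI 0)) \<le> \<epsilon>0" using XT_reaches init \<psi>(1) \<psi>T by fastforce
  note window = frozen_window[OF u0 \<psi>(2) less_imp_le[OF T_pos] this]
  have "norm (\<psi> t) \<le> Rs - 1" if t: "t \<in> {0..T1}" for t
  proof (cases "t \<le> T")
    case True
    then have "norm (\<psi> t) \<le> R0" using R0(2) init \<psi>(1) \<psi>T t by fastforce
    then show ?thesis using XM(1) A1_constants_pos unfolding Rs by (simp add: add_increasing2)
  next
    case False
    then have "t - T \<in> {0..S}" using t unfolding T1_def by auto
    with window(1) show ?thesis by fastforce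
  qed
  moreover have "norm (\<psi> T1 - \<Xi> (uI 0)) \<le> \<epsilon>0 / 4"
    using window(2) \<open>norm (\<psi> T - \<Xi> (uI 0)) \<le> \<epsilon>0\<close> unfolding T1_def by simp
  ultimately show thesis using that \<psi> by blast
qed

lemma transient_phase: "(\<forall>t\<in>{0..T1}. norm (x t) \<le> Rs) \<and> xe T1 \<le> \<epsilon>0"
proof -
  obtain \<psi> where \<psi>: "plant_sol f (\<lambda>_. uI 0) {0..} \<psi>" "\<psi> 0 = x 0"
    "\<forall>t\<in>{0..T1}. norm (\<psi> t) \<le> Rs - 1" "norm (\<psi> T1 - \<Xi> (uI 0)) \<le> \<epsilon>0 / 4"
    using frozen_transient by blast
  have c_tr_eq: "k * (Lf * (T1 + \<tau>p) * T1 * exp (Lf * T1)) * (2 * Gb) = k * c_tr"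
    by (simp add: c_tr_def mult_ac)
  have dev: "\<forall>t\<in>{0..T1}. norm (x t - \<psi> t) \<le> k * c_tr \<and> norm (x t) \<le> Rs"
    using closed_loop_deviation[of 0 T1 \<psi> "2 * Gb"] plant_sol_subset[OF \<psi>(1)] \<psi>(2,3) constants_pos
      Gb(1) abs_r_minus_g_le gain_transient(1) unfolding c_tr_eq by auto
  have "\<bar>uI T1 - uI 0\<bar> \<le> k * (2 * Gb) * (T1 - 0)"
    by (rule uI_increment_le) (use constants_pos Gb dev abs_r_minus_g_le in auto)
  then have "LX * \<bar>uI 0 - uI T1\<bar> \<le> LX * (k * (2 * Gb) * T1)"
    using LX(1) by (intro mult_left_mono) (auto simp: abs_minus_commute)
  moreover have "norm (\<Xi> (uI 0) - \<Xi> (uI T1)) \<le> LX * \<bar>uI 0 - uI T1\<bar>"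
    using LX(2) uI_in_ab[of 0] uI_in_ab[of T1] constants_pos by auto
  moreover have "norm (x T1 - \<psi> T1) \<le> k * c_tr" using dev constants_pos by auto
  moreover have "xe T1 \<le> norm (x T1 - \<psi> T1) + norm (\<psi> T1 - \<Xi> (uI 0)) + norm (\<Xi> (uI 0) - \<Xi> (uI T1))"
    unfolding xe_def by (metis norm_diff_triangle_le order_refl add.assoc)
  ultimately have "xe T1 \<le> k * c_tr + \<epsilon>0 / 4 + LX * (k * (2 * Gb) * T1)"
    using \<psi>(4) by linarith
  also have "\<dots> \<le> \<epsilon>0" using gain_transient(2) by (simp add: algebra_simps)
  finally show ?thesis using dev by blast
qed

lemma abs_r_minus_g_le_errors:
  assumes "0 \<le> t" "norm (x t) \<le> Rs"
  shows "\<bar>r - g (x t)\<bar> \<le> Lg * LX * ue t + Lg * xe t"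
proof -
  have uI: "uI t \<in> {a..b}" using uI_in_ab[OF assms(1)] .
  have "\<bar>r - g (x t)\<bar> \<le> \<bar>g (\<Xi> ur) - g (\<Xi> (uI t))\<bar> + \<bar>g (\<Xi> (uI t)) - g (x t)\<bar>"
    using ur_solves(2) by linarith
  also have "\<dots> \<le> Lg * norm (\<Xi> ur - \<Xi> (uI t)) + Lg * norm (\<Xi> (uI t) - x t)"
    using g_lipschitz \<Xi>_in_cball ur_in_ab uI assms(2) by (intro add_mono) auto
  also have "norm (\<Xi> ur - \<Xi> (uI t)) \<le> LX * ue t"
    using LX(2) ur_in_ab uI unfolding ue_def by (metis abs_minus_commute)
  finally show ?thesis using Lg(1) unfolding xe_def
    by (simp add: norm_minus_commute mult_left_mono mult.assoc)
qed

definition "window_bounds tn Q \<longleftrightarrow> (\<forall>s\<in>{0..S}. norm (x (tn + s)) \<le> Rs \<and>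
  \<bar>r - g (x (tn + s))\<bar> \<le> Q \<and> \<bar>uI (tn + s) - uI tn\<bar> \<le> k * S * Q \<and> xe (tn + s) \<le> m * xe tn + k * c_drift * Q)"

lemma window_bounds_nonneg: "window_bounds tn Q \<Longrightarrow> 0 \<le> Q"
proof -
  assume "window_bounds tn Q"
  moreover have "0 \<in> {0..S}" using S(1) by simp
  ultimately have "\<bar>r - g (x (tn + 0))\<bar> \<le> Q" unfolding window_bounds_def by blast
  then show "0 \<le> Q" by linarith
qed

lemma window_bounds_at:
  assumes "window_bounds tn Q" "\<tau> \<in> {tn..tn + S}"
  shows "norm (x \<tau>) \<le> Rs" "\<bar>uI \<tau> - uI tn\<bar> \<le> k * S * Q" "xe \<tau> \<le> m * xe tn + k * c_drift * Q"
    "\<bar>r - g (x \<tau>)\<bar> \<le> Q"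
proof -
  have "\<tau> - tn \<in> {0..S}" using assms(2) by auto
  with assms(1) show "norm (x \<tau>) \<le> Rs" "\<bar>uI \<tau> - uI tn\<bar> \<le> k * S * Q" "xe \<tau> \<le> m * xe tn + k * c_drift * Q"
    "\<bar>r - g (x \<tau>)\<bar> \<le> Q"
    unfolding window_bounds_def by fastforce+
qed

lemma window_error_le:
  assumes tn: "0 \<le> tn" and s: "s \<in> {0..S}" and bounds: "window_bounds tn Q"
    and Q: "Q = \<bar>r - g (x (tn + s))\<bar>"
  shows "Q \<le> c_Q * (ue tn + xe tn)"
proof -
  have "0 \<le> tn + s" "norm (x (tn + s)) \<le> Rs" "\<bar>uI (tn + s) - uI tn\<bar> \<le> k * S * Q"
    "xe (tn + s) \<le> m * xe tn + k * c_drift * Q"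
    using tn s bounds unfolding window_bounds_def by auto
  moreover have "ue (tn + s) \<le> ue tn + k * S * Q"
    using calculation(3) unfolding ue_def by linarith
  ultimately have "Q \<le> Lg * LX * (ue tn + k * S * Q) + Lg * (m * xe tn + k * c_drift * Q)"
    using abs_r_minus_g_le_errors[of "tn + s"] Q mult_left_mono[of _ _ "Lg * LX"] mult_left_mono[of _ _ Lg]
      Lg(1) LX(1) by (smt (verit) mult_nonneg_nonneg)
  also have "\<dots> = Lg * LX * ue tn + Lg * m * xe tn + (k * c_QQ) * Q"
    by (simp add: c_QQ_def c_drift_def algebra_simps)
  also have "(k * c_QQ) * Q \<le> 1/2 * Q" using gain_Q Q by (intro mult_right_mono) auto
  finally have "Q \<le> 2 * (Lg * LX * ue tn + Lg * m * xe tn)" by simp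
  also have "\<dots> \<le> c_Q * (ue tn + xe tn)"
    using Lg(1) LX(1) constants_pos unfolding c_Q_def ue_def xe_def
    by (simp add: algebra_simps add_increasing add_increasing2)
  finally show ?thesis .
qed

lemma window_frozen:
  assumes tn: "0 \<le> tn" and near: "xe tn \<le> \<epsilon>0"
  obtains \<psi> where "plant_sol f (\<lambda>_. uI tn) {0..S} \<psi>" "\<psi> 0 = x tn"
    "\<forall>s\<in>{0..S}. norm (\<psi> s - \<Xi> (uI tn)) \<le> m * xe tn \<and> norm (\<psi> s) \<le> Rs - 1"
    "norm (\<psi> S - \<Xi> (uI tn)) \<le> xe tn / 4"
proof -
  have v: "uI tn \<in> {a..b}" using uI_in_ab[OF tn] .
  obtain \<psi> where \<psi>: "\<psi> 0 = x tn" "plant_sol f (\<lambda>_. uI tn) {0..} \<psi>"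
    using frozen_sol_exists[OF v] by blast
  have "norm (\<psi> 0 - \<Xi> (uI tn)) \<le> \<epsilon>0" using near \<psi>(1) by (simp add: xe_def)
  from frozen_window[OF v \<psi>(2) order_refl this] \<psi>(1) that[OF plant_sol_subset[OF \<psi>(2)] \<psi>(1)]
  show thesis by (simp add: xe_def)
qed

lemma window_error_attains_max:
  assumes tn: "0 \<le> tn" and inside: "\<forall>s\<in>{0..S}. norm (x (tn + s)) \<le> Rs"
  obtains s0 where "s0 \<in> {0..S}" "\<forall>s\<in>{0..S}. \<bar>r - g (x (tn + s))\<bar> \<le> \<bar>r - g (x (tn + s0))\<bar>"
proof -
  have "continuous_on (cball 0 Rs) g" using Lg(2) by (rule lipschitz_on_continuous_on)
  moreover have "continuous_on {0..S} (\<lambda>s. x (tn + s))"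
    using plant_sol_continuous_on[OF plant_sol_shift[OF x_plant_sol tn]] by (rule continuous_on_subset) auto
  moreover have "(\<lambda>s. x (tn + s)) ` {0..S} \<subseteq> cball 0 Rs" using inside by auto
  ultimately have "continuous_on {0..S} (\<lambda>s. g (x (tn + s)))"
    by (rule continuous_on_compose2)
  then have "continuous_on {0..S} (\<lambda>s. \<bar>r - g (x (tn + s))\<bar>)" by (intro continuous_intros)
  from continuous_attains_sup[OF compact_Icc _ this] S(1) that show thesis by auto
qed

lemma uI_window_drift:
  assumes tn: "0 \<le> tn" and Q: "\<forall>s\<in>{0..S}. \<bar>r - g (x (tn + s))\<bar> \<le> Q" and s: "s \<in> {0..S}"
  shows "\<bar>uI (tn + s) - uI tn\<bar> \<le> k * S * Q"
proof -
  have "0 \<le> Q" using Q S(1) by (meson abs_ge_zero atLeastAtMost_iff order.trans order_refl less_imp_le)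
  have "\<bar>uI (tn + s) - uI tn\<bar> \<le> k * Q * (tn + s - tn)"
  proof (rule uI_increment_le)
    fix \<tau> assume "\<tau> \<in> {tn..tn + s}"
    then have "\<tau> - tn \<in> {0..S}" using s by auto
    with Q show "\<bar>r - g (x \<tau>)\<bar> \<le> Q" by fastforce
  qed (use tn s \<open>0 \<le> Q\<close> in auto)
  also have "\<dots> \<le> k * Q * S" using s k_pos \<open>0 \<le> Q\<close> by (intro mult_left_mono) auto
  finally show ?thesis by (simp add: mult_ac)
qed

lemma xe_le_via_frozen:
  assumes tn: "0 \<le> tn" and s: "s \<in> {0..S}"
    and close: "norm (x (tn + s) - \<psi> s) \<le> k * c_win * Q"
    and drift: "\<bar>uI (tn + s) - uI tn\<bar> \<le> k * S * Q"
  shows "xe (tn + s) \<le> norm (\<psi> s - \<Xi> (uI tn)) + k * c_drift * Q"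
proof -
  have "norm (\<Xi> (uI tn) - \<Xi> (uI (tn + s))) \<le> LX * \<bar>uI tn - uI (tn + s)\<bar>"
    using LX(2) uI_in_ab[of tn] uI_in_ab[of "tn + s"] tn s by auto
  also have "\<dots> \<le> LX * (k * S * Q)"
    using drift LX(1) by (intro mult_left_mono) (auto simp: abs_minus_commute)
  finally have "norm (\<Xi> (uI tn) - \<Xi> (uI (tn + s))) \<le> LX * (k * S * Q)" .
  moreover have "xe (tn + s) \<le> norm (x (tn + s) - \<psi> s) + norm (\<psi> s - \<Xi> (uI tn))
      + norm (\<Xi> (uI tn) - \<Xi> (uI (tn + s)))"
    unfolding xe_def by (metis norm_diff_triangle_le order_refl add.assoc)
  moreover have "k * c_win * Q + LX * (k * S * Q) = k * c_drift * Q"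
    by (simp add: c_drift_def algebra_simps)
  ultimately show ?thesis using close by linarith
qed

text \<open>The window is first passed with the crude bound 2 Gb on the tracking error, which keeps x
  in the ball of radius Rs; the maximal tracking error Q on the window then gives the fine bounds.\<close>

lemma window_step:
  assumes tn: "0 \<le> tn" and near: "xe tn \<le> \<epsilon>0"
  obtains Q where "0 \<le> Q" "Q \<le> c_Q * (ue tn + xe tn)" "window_bounds tn Q"
    "xe (tn + S) \<le> xe tn / 4 + k * c_drift * Q"
proof -
  obtain \<psi> where \<psi>: "plant_sol f (\<lambda>_. uI tn) {0..S} \<psi>" "\<psi> 0 = x tn"
    and frozen: "\<forall>s\<in>{0..S}. norm (\<psi> s - \<Xi> (uI tn)) \<le> m * xe tn \<and> norm (\<psi> s) \<le> Rs - 1"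
      "norm (\<psi> S - \<Xi> (uI tn)) \<le> xe tn / 4"
    using window_frozen[OF tn near] by blast
  have "\<forall>s\<in>{0..S}. norm (\<psi> s) \<le> Rs - 1" using frozen(1) by blast
  note deviation = closed_loop_deviation[OF tn less_imp_le[OF S(1)] \<psi> this]
  have c_win_eq: "k * (Lf * (S + \<tau>p) * S * exp (Lf * S)) * Q = k * c_win * Q" for Q
    by (simp add: c_win_def)
  have small: "k * c_win * (2 * Gb) < 1" using gain_window by (simp add: mult_ac)
  then have inside: "\<forall>s\<in>{0..S}. norm (x (tn + s)) \<le> Rs"
    using deviation[of "2 * Gb"] Gb(1) abs_r_minus_g_le unfolding c_win_eq by auto
  obtain s0 where s0: "s0 \<in> {0..S}"
    and Q_max: "\<forall>s\<in>{0..S}. \<bar>r - g (x (tn + s))\<bar> \<le> \<bar>r - g (x (tn + s0))\<bar>"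
    using window_error_attains_max[OF tn inside] by blast
  define Q where "Q = \<bar>r - g (x (tn + s0))\<bar>"
  have Q: "0 \<le> Q" "Q \<le> 2 * Gb" using abs_r_minus_g_le inside s0 by (auto simp: Q_def)
  have "k * c_win * Q \<le> k * c_win * (2 * Gb)"
    using Q k_pos constants_pos by (intro mult_left_mono) auto
  then have close: "\<forall>s\<in>{0..S}. norm (x (tn + s) - \<psi> s) \<le> k * c_win * Q"
    using deviation[of Q] Q Q_max small unfolding c_win_eq Q_def by auto
  have Q_max': "\<forall>s\<in>{0..S}. \<bar>r - g (x (tn + s))\<bar> \<le> Q" using Q_max by (simp add: Q_def)
  note xe_le = xe_le_via_frozen[OF tn _ _ uI_window_drift[OF tn Q_max']]
  have bounds: "window_bounds tn Q"
    unfolding window_bounds_def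
  proof
    fix s assume s: "s \<in> {0..S}"
    have "xe (tn + s) \<le> m * xe tn + k * c_drift * Q"
      using xe_le[OF s _ s] close frozen(1) s by fastforce
    then show "norm (x (tn + s)) \<le> Rs \<and> \<bar>r - g (x (tn + s))\<bar> \<le> Q \<and> \<bar>uI (tn + s) - uI tn\<bar> \<le> k * S * Q
      \<and> xe (tn + s) \<le> m * xe tn + k * c_drift * Q"
      using inside Q_max' uI_window_drift[OF tn Q_max' s] s by blast
  qed
  moreover have "xe (tn + S) \<le> xe tn / 4 + k * c_drift * Q"
    using xe_le[of S] close frozen(2) S(1) by fastforce
  moreover have "Q \<le> c_Q * (ue tn + xe tn)"
    by (rule window_error_le[OF tn s0 bounds]) (simp add: Q_def)
  ultimately show thesis using that Q by blast
qed

lemma \<sigma>_le_if_above: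
  assumes "0 \<le> \<tau>" "norm (x \<tau>) \<le> Rs" "ur \<le> uI \<tau>"
  shows "\<sigma> \<tau> \<le> k * (- \<mu> * (uI \<tau> - ur) + Lg * xe \<tau>)"
  unfolding \<sigma>_def
proof (rule sat_le[OF umin_less_umax])
  have uI: "uI \<tau> \<in> {a..b}" using uI_in_ab[OF assms(1)] .
  have "r - g (x \<tau>) = - (g (\<Xi> (uI \<tau>)) - g (\<Xi> ur)) + (g (\<Xi> (uI \<tau>)) - g (x \<tau>))" using ur_solves(2) by simp
  also have "\<dots> \<le> - \<mu> * (uI \<tau> - ur) + Lg * xe \<tau>"
    using G_increasing[OF ur_in_ab uI assms(3)] g_lipschitz[OF \<Xi>_in_cball[OF uI], of "x \<tau>"] assms(2)
    unfolding xe_def by (simp add: norm_minus_commute)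
  finally show "k * (r - g (x \<tau>)) \<le> k * (- \<mu> * (uI \<tau> - ur) + Lg * xe \<tau>)"
    using k_pos by (intro mult_left_mono) auto
  assume "uI \<tau> \<le> umin"
  then have "uI \<tau> = ur" using assms(3) ur_solves(1) by auto
  then show "0 \<le> k * (- \<mu> * (uI \<tau> - ur) + Lg * xe \<tau>)" using k_pos Lg(1) by (simp add: xe_def)
qed

lemma \<sigma>_ge_if_below:
  assumes "0 \<le> \<tau>" "norm (x \<tau>) \<le> Rs" "uI \<tau> \<le> ur"
  shows "k * (\<mu> * (ur - uI \<tau>) - Lg * xe \<tau>) \<le> \<sigma> \<tau>"
  unfolding \<sigma>_def
proof (rule sat_ge[OF umin_less_umax])
  have uI: "uI \<tau> \<in> {a..b}" using uI_in_ab[OF assms(1)] .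
  have "\<mu> * (ur - uI \<tau>) - Lg * xe \<tau> \<le> (g (\<Xi> ur) - g (\<Xi> (uI \<tau>))) + (g (\<Xi> (uI \<tau>)) - g (x \<tau>))"
    using G_increasing[OF uI ur_in_ab assms(3)] g_lipschitz[OF \<Xi>_in_cball[OF uI], of "x \<tau>"] assms(2)
    unfolding xe_def by (simp add: norm_minus_commute)
  also have "\<dots> = r - g (x \<tau>)" using ur_solves(2) by simp
  finally show "k * (\<mu> * (ur - uI \<tau>) - Lg * xe \<tau>) \<le> k * (r - g (x \<tau>))"
    using k_pos by (intro mult_left_mono) auto
  assume "umax \<le> uI \<tau>"
  then have "uI \<tau> = ur" using assms(3) ur_solves(1) by auto
  then show "k * (\<mu> * (ur - uI \<tau>) - Lg * xe \<tau>) \<le> 0" using k_pos Lg(1) by (simp add: xe_def)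
qed

lemma ue_recursion_arith:
  assumes E: "0 \<le> E" and z: "0 \<le> z" and Q: "0 \<le> Q" "Q \<le> c_Q * (E + z)"
    and e1: "e1 \<le> E + S * (- k * \<mu> * (E - k * S * Q) + k * Lg * (m * z + k * c_drift * Q))"
  shows "e1 \<le> (1 - k * \<mu> * S / 2) * E + k * c_cross * z"
proof -
  define P where "P = \<mu> * S^2 + S * Lg * c_drift"
  have P0: "P \<ge> 0" unfolding P_def using A1_constants_pos S Lg constants_pos by simp
  have eq: "E + S * (- k * \<mu> * (E - k * S * Q) + k * Lg * (m * z + k * c_drift * Q))
      = E - k * \<mu> * S * E + k * (k * (P * Q)) + k * (S * Lg * m) * z"
    unfolding P_def by (simp add: algebra_simps power2_eq_square)
  have "P * Q \<le> P * (c_Q * (E + z))" using Q P0 by (intro mult_left_mono) auto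
  also have "\<dots> = c_quad * E + c_quad * z" unfolding P_def c_quad_def by (simp add: algebra_simps)
  finally have "k * (P * Q) \<le> k * (c_quad * E + c_quad * z)"
    using k_pos by (intro mult_left_mono) auto
  also have "\<dots> = k * c_quad * E + k * c_quad * z" by (simp add: algebra_simps)
  also have "k * c_quad * E \<le> (\<mu> * S / 2) * E" using gain_quad E by (intro mult_right_mono) auto
  also have "k * c_quad * z \<le> c_quad * z"
    using gain_le_1 k_pos constants_pos z by (intro mult_right_mono) (auto simp: mult_left_le_one_le)
  finally have "k * (k * (P * Q)) \<le> k * ((\<mu> * S / 2) * E + c_quad * z)"
    using k_pos by (intro mult_left_mono) auto
  moreover have "k * (S * Lg * m + c_quad) * z \<le> k * c_cross * z"
    using k_pos z S constants_pos unfolding c_cross_def by (intro mult_right_mono mult_left_mono) auto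
  ultimately show ?thesis using e1 eq by (simp add: algebra_simps)
qed

lemma uI_window_decrease:
  assumes tn: "0 \<le> tn" and bounds: "window_bounds tn Q" and above: "2 * (k * S * Q) \<le> uI tn - ur"
  shows "uI (tn + S) - ur \<le> (uI tn - ur) + S * (- k * \<mu> * ((uI tn - ur) - k * S * Q)
    + k * Lg * (m * xe tn + k * c_drift * Q))"
proof -
  define c where "c = - k * \<mu> * ((uI tn - ur) - k * S * Q) + k * Lg * (m * xe tn + k * c_drift * Q)"
  have "\<sigma> \<tau> \<le> c" if \<tau>: "\<tau> \<in> {tn..tn + S}" for \<tau>
  proof -
    note window = window_bounds_at[OF bounds \<tau>]
    have "0 \<le> k * S * Q" using window_bounds_nonneg[OF bounds] k_pos S(1) by simp
    then have drift: "(uI tn - ur) - k * S * Q \<le> uI \<tau> - ur" "ur \<le> uI \<tau>"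
      using window(2) above by linarith+
    have "\<sigma> \<tau> \<le> k * (- \<mu> * (uI \<tau> - ur) + Lg * xe \<tau>)"
      using \<sigma>_le_if_above[OF _ window(1) drift(2)] tn \<tau> by simp
    also have "\<dots> \<le> k * (- \<mu> * ((uI tn - ur) - k * S * Q) + Lg * (m * xe tn + k * c_drift * Q))"
    proof -
      have "\<mu> * ((uI tn - ur) - k * S * Q) \<le> \<mu> * (uI \<tau> - ur)"
        using drift(1) A1_constants_pos by (intro mult_left_mono) auto
      moreover have "Lg * xe \<tau> \<le> Lg * (m * xe tn + k * c_drift * Q)"
        using window(3) Lg(1) by (intro mult_left_mono) auto
      ultimately show ?thesis using k_pos by (intro mult_left_mono) auto
    qed
    also have "\<dots> = c" by (simp add: c_def algebra_simps)
    finally show ?thesis .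
  qed
  then have "uI (tn + S) - uI tn \<le> Henstock_Kurzweil_Integration.content {tn..tn + S} *\<^sub>R c"
    using has_integral_le[OF I.has_integral_increment[of tn "tn + S"] has_integral_const_real] tn S(1)
    by auto
  then show ?thesis using S(1) by (simp add: c_def)
qed

lemma uI_window_increase:
  assumes tn: "0 \<le> tn" and bounds: "window_bounds tn Q" and below: "2 * (k * S * Q) \<le> ur - uI tn"
  shows "ur - uI (tn + S) \<le> (ur - uI tn) + S * (- k * \<mu> * ((ur - uI tn) - k * S * Q)
    + k * Lg * (m * xe tn + k * c_drift * Q))"
proof -
  define c where "c = - k * \<mu> * ((ur - uI tn) - k * S * Q) + k * Lg * (m * xe tn + k * c_drift * Q)"
  have "- c \<le> \<sigma> \<tau>" if \<tau>: "\<tau> \<in> {tn..tn + S}" for \<tau>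
  proof -
    note window = window_bounds_at[OF bounds \<tau>]
    have "0 \<le> k * S * Q" using window_bounds_nonneg[OF bounds] k_pos S(1) by simp
    then have drift: "(ur - uI tn) - k * S * Q \<le> ur - uI \<tau>" "uI \<tau> \<le> ur"
      using window(2) below by linarith+
    have "- c = k * (\<mu> * ((ur - uI tn) - k * S * Q) - Lg * (m * xe tn + k * c_drift * Q))"
      by (simp add: c_def algebra_simps)
    also have "\<dots> \<le> k * (\<mu> * (ur - uI \<tau>) - Lg * xe \<tau>)"
    proof -
      have "\<mu> * ((ur - uI tn) - k * S * Q) \<le> \<mu> * (ur - uI \<tau>)"
        using drift(1) A1_constants_pos by (intro mult_left_mono) auto
      moreover have "Lg * xe \<tau> \<le> Lg * (m * xe tn + k * c_drift * Q)"
        using window(3) Lg(1) by (intro mult_left_mono) auto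
      ultimately show ?thesis using k_pos by (intro mult_left_mono) auto
    qed
    also have "\<dots> \<le> \<sigma> \<tau>" using \<sigma>_ge_if_below[OF _ window(1) drift(2)] tn \<tau> by simp
    finally show ?thesis .
  qed
  then have "Henstock_Kurzweil_Integration.content {tn..tn + S} *\<^sub>R (- c) \<le> uI (tn + S) - uI tn"
    using has_integral_le[OF has_integral_const_real[of "- c"] I.has_integral_increment[of tn "tn + S"]]
      tn S(1) by auto
  then have "- (S * c) \<le> uI (tn + S) - uI tn" using S(1) by simp
  then show ?thesis unfolding c_def[symmetric] by linarith
qed

lemma ue_window_step:
  assumes tn: "0 \<le> tn" and Q: "Q \<le> c_Q * (ue tn + xe tn)" and bounds: "window_bounds tn Q"
  shows "ue (tn + S) \<le> (1 - k * \<mu> * S / 2) * ue tn + k * c_cross * xe tn"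
proof -
  have Q0: "0 \<le> Q" using window_bounds_nonneg[OF bounds] .
  have xe0: "0 \<le> xe tn" by (simp add: xe_def)
  have kSQ: "0 \<le> k * S * Q" using Q0 k_pos S(1) by simp
  have drift: "\<bar>uI (tn + S) - uI tn\<bar> \<le> k * S * Q"
    using window_bounds_at(2)[OF bounds, of "tn + S"] S(1) by simp
  consider "2 * (k * S * Q) \<le> uI tn - ur" | "2 * (k * S * Q) \<le> ur - uI tn"
    | "\<bar>uI tn - ur\<bar> < 2 * (k * S * Q)" by linarith
  then show ?thesis
  proof cases
    case 1
    with uI_window_decrease[OF tn bounds] ue_recursion_arith[OF _ xe0 Q0, of "uI tn - ur"] Q kSQ
    have "uI (tn + S) - ur \<le> (1 - k * \<mu> * S / 2) * ue tn + k * c_cross * xe tn"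
      unfolding ue_def by (simp add: abs_of_nonneg)
    moreover have "0 \<le> uI (tn + S) - ur" using 1 drift kSQ by linarith
    ultimately show ?thesis unfolding ue_def by simp
  next
    case 2
    with uI_window_increase[OF tn bounds] ue_recursion_arith[OF _ xe0 Q0, of "ur - uI tn"] Q kSQ
    have "ur - uI (tn + S) \<le> (1 - k * \<mu> * S / 2) * ue tn + k * c_cross * xe tn"
      unfolding ue_def by (simp add: abs_of_nonneg abs_minus_commute)
    moreover have "0 \<le> ur - uI (tn + S)" using 2 drift kSQ by linarith
    ultimately show ?thesis unfolding ue_def by simp
  next
    case 3
    have "ue (tn + S) \<le> 3 * (k * S * Q)" using 3 drift unfolding ue_def by linarith
    also have "\<dots> \<le> k * (3 * S * c_Q) * ue tn + k * (3 * S * c_Q) * xe tn"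
      using mult_left_mono[OF Q, of "3 * k * S"] k_pos S(1) by (simp add: algebra_simps)
    also have "k * (3 * S * c_Q) * ue tn \<le> (1 - k * \<mu> * S / 2) * ue tn"
      using gain_contraction by (intro mult_right_mono) (auto simp: algebra_simps ue_def)
    also have "k * (3 * S * c_Q) * xe tn \<le> k * c_cross * xe tn"
      unfolding c_cross_def using k_pos xe0 S Lg(1) constants_pos
      by (intro mult_right_mono mult_left_mono) auto
    finally show ?thesis by simp
  qed
qed

definition "V t = ue t + \<beta> * xe t"
definition "\<rho> = 1 - k * \<mu> * S / 4"

lemma \<rho>: "0 < \<rho>" "\<rho> < 1"
proof -
  have "k * (\<mu> * S / 2) \<le> k * (3 * S * c_Q + \<mu> * S / 2)"
    using k_pos S(1) constants_pos by (intro mult_left_mono) auto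
  then show "0 < \<rho>" using gain_contraction unfolding \<rho>_def by (simp add: algebra_simps)
  show "\<rho> < 1" unfolding \<rho>_def using k_pos S(1) A1_constants_pos by simp
qed

lemma V_recursion_arith:
  assumes E: "0 \<le> E" and z: "0 \<le> z" and Q: "Q \<le> c_Q * (E + z)"
    and e1: "e1 \<le> (1 - k * \<mu> * S / 2) * E + k * c_cross * z"
    and z1: "z1 \<le> z / 4 + k * c_drift * Q"
  shows "e1 + \<beta> * z1 \<le> \<rho> * (E + \<beta> * z)"
proof -
  have \<beta>: "\<beta> * (c_drift * c_Q) = \<mu> * S / 4" "0 < \<beta>"
    unfolding \<beta>_def using constants_pos S(1) A1_constants_pos by (simp_all add: field_simps)
  have h1: "\<beta> * z1 \<le> \<beta> / 4 * z + \<beta> * k * c_drift * Q"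
    using mult_left_mono[OF z1, of \<beta>] \<beta>(2) by (simp add: algebra_simps)
  have "\<beta> * k * c_drift * Q \<le> \<beta> * k * c_drift * (c_Q * (E + z))"
    using Q \<beta>(2) k_pos constants_pos by (intro mult_left_mono) auto
  also have "\<dots> = k * (\<beta> * (c_drift * c_Q)) * E + k * (\<beta> * c_drift * c_Q) * z"
    by (simp add: algebra_simps)
  finally have h2: "\<beta> * k * c_drift * Q \<le> k * (\<mu> * S / 4) * E + k * (\<beta> * c_drift * c_Q) * z"
    unfolding \<beta>(1) .
  have "(k * c_cross + \<beta> / 4 + k * (\<beta> * c_drift * c_Q)) * z \<le> (\<rho> * \<beta>) * z"
    using gain_lyapunov z unfolding \<rho>_def by (intro mult_right_mono) (auto simp: algebra_simps)
  then have h3: "k * c_cross * z + \<beta> / 4 * z + k * (\<beta> * c_drift * c_Q) * z \<le> \<rho> * \<beta> * z"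
    by (simp add: algebra_simps)
  have h4: "\<rho> * (E + \<beta> * z) = (1 - k * \<mu> * S / 2) * E + k * (\<mu> * S / 4) * E + \<rho> * \<beta> * z"
    unfolding \<rho>_def by (simp add: algebra_simps)
  show ?thesis using e1 h1 h2 h3 h4 by linarith
qed

lemma contraction_step:
  assumes tn: "0 \<le> tn" and near: "xe tn \<le> \<epsilon>0"
  shows "xe (tn + S) \<le> \<epsilon>0" "V (tn + S) \<le> \<rho> * V tn"
proof -
  obtain Q where Q: "0 \<le> Q" "Q \<le> c_Q * (ue tn + xe tn)" "window_bounds tn Q"
    "xe (tn + S) \<le> xe tn / 4 + k * c_drift * Q"
    using window_step[OF tn near] by blast
  have "ue tn \<le> b - a" using uI_in_ab[OF tn] ur_in_ab unfolding ue_def by auto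
  then have "k * c_drift * Q \<le> k * (c_drift * c_Q * (b - a + \<epsilon>0))"
    using Q(2) near k_pos constants_pos
    by (simp add: mult_left_mono order_trans[OF _ mult_left_mono[of _ _ c_Q]] mult.assoc)
  also have "\<dots> \<le> 3 * \<epsilon>0 / 4" by (rule gain_window_error)
  finally show "xe (tn + S) \<le> \<epsilon>0" using Q(4) near by linarith
  show "V (tn + S) \<le> \<rho> * V tn"
    unfolding V_def
    by (rule V_recursion_arith[OF _ _ Q(2) ue_window_step[OF tn Q(2,3)] Q(4)])
      (simp_all add: ue_def xe_def)
qed

definition "t_win n = T1 + real n * S"

lemma lyapunov_decay: "xe (t_win n) \<le> \<epsilon>0 \<and> V (t_win n) \<le> \<rho> ^ n * V T1"
proof (induction n)
  case 0
  then show ?case using transient_phase by (simp add: t_win_def)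
next
  case (Suc n)
  have "0 \<le> t_win n" unfolding t_win_def using constants_pos S(1) by simp
  moreover have "t_win (Suc n) = t_win n + S" by (simp add: t_win_def algebra_simps)
  moreover have "\<rho> * V (t_win n) \<le> \<rho> * (\<rho> ^ n * V T1)" using Suc \<rho> by (intro mult_left_mono) auto
  ultimately show ?case using contraction_step[of "t_win n"] Suc by auto
qed

definition "W t = ue t + xe t + \<bar>r - g (x t)\<bar>"

lemma errors_le_W:
  assumes "0 \<le> t"
  shows "norm (x t - \<Xi> ur) \<le> (1 + LX + \<tau>p) * W t" "\<bar>u_plant t - ur\<bar> \<le> (1 + LX + \<tau>p) * W t"
    "\<bar>g (x t) - r\<bar> \<le> (1 + LX + \<tau>p) * W t"
proof -
  have W: "0 \<le> ue t" "0 \<le> xe t" "0 \<le> \<bar>r - g (x t)\<bar>" "W t = ue t + xe t + \<bar>r - g (x t)\<bar>"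
    by (simp_all add: ue_def xe_def W_def)
  have scaled: "LX * ue t \<le> LX * W t" "\<tau>p * \<bar>r - g (x t)\<bar> \<le> \<tau>p * W t" "0 \<le> LX * W t" "0 \<le> \<tau>p * W t"
    using W LX(1) \<tau>p_nonneg by (simp_all add: mult_left_mono)
  have split: "(1 + LX + \<tau>p) * W t = W t + LX * W t + \<tau>p * W t" by (simp add: algebra_simps)
  have "norm (\<Xi> (uI t) - \<Xi> ur) \<le> LX * ue t"
    using LX(2) uI_in_ab[OF assms] ur_in_ab unfolding ue_def by blast
  then have "norm (x t - \<Xi> ur) \<le> xe t + LX * ue t"
    unfolding xe_def using norm_diff_triangle_le by blast
  then show "norm (x t - \<Xi> ur) \<le> (1 + LX + \<tau>p) * W t"
    using W scaled split by linarith
  have "\<bar>u_plant t - ur\<bar> \<le> ue t + \<bar>\<tau>p * k * (r - g (x t))\<bar>"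
    unfolding u_plant_def ue_def by linarith
  also have "\<bar>\<tau>p * k * (r - g (x t))\<bar> = k * (\<tau>p * \<bar>r - g (x t)\<bar>)"
    using \<tau>p_nonneg k_pos by (simp add: abs_mult)
  also have "\<dots> \<le> \<tau>p * \<bar>r - g (x t)\<bar>"
    using gain_le_1 k_pos \<tau>p_nonneg W(3) by (simp add: mult_left_le_one_le)
  finally show "\<bar>u_plant t - ur\<bar> \<le> (1 + LX + \<tau>p) * W t"
    using W scaled split by linarith
  show "\<bar>g (x t) - r\<bar> \<le> (1 + LX + \<tau>p) * W t"
    using W scaled split by (simp add: abs_minus_commute)
qed

lemma W_le_in_window:
  assumes t: "t \<in> {t_win n..t_win n + S}"
  shows "W t \<le> (1 + m + (S + c_drift + 1) * c_Q) * (1 + 1 / \<beta>) * V (t_win n)"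
proof -
  define tn where "tn = t_win n"
  have tn: "0 \<le> tn" unfolding tn_def t_win_def using constants_pos S(1) by simp
  obtain Q where Q: "Q \<le> c_Q * (ue tn + xe tn)" "window_bounds tn Q"
    using window_step[OF tn] lyapunov_decay unfolding tn_def by blast
  note window = window_bounds_at[OF Q(2) t[folded tn_def]]
  have nonneg: "0 \<le> Q" "0 \<le> ue tn" "0 \<le> xe tn"
    using window_bounds_nonneg[OF Q(2)] by (simp_all add: ue_def xe_def)
  have "W t \<le> ue tn + m * xe tn + (k * S + k * c_drift + 1) * Q"
    using window unfolding W_def ue_def by (simp add: algebra_simps)
  also have "(k * S + k * c_drift + 1) * Q \<le> (S + c_drift + 1) * Q"
    using gain_le_1 k_pos S(1) constants_pos nonneg
    by (intro mult_right_mono add_mono) (auto simp: mult_left_le_one_le)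
  also have "(S + c_drift + 1) * Q \<le> (S + c_drift + 1) * c_Q * (ue tn + xe tn)"
    using Q(1) S(1) constants_pos by (simp add: mult_left_mono mult.assoc)
  also have "ue tn + m * xe tn \<le> (1 + m) * (ue tn + xe tn)"
    using nonneg A1_constants_pos by (simp add: algebra_simps)
  finally have "W t \<le> (1 + m + (S + c_drift + 1) * c_Q) * (ue tn + xe tn)"
    by (simp add: algebra_simps)
  also have "ue tn + xe tn \<le> (1 + 1 / \<beta>) * V tn"
    using nonneg constants_pos unfolding V_def by (simp add: field_simps)
  finally show ?thesis unfolding tn_def
    using constants_pos S(1) A1_constants_pos by (simp add: mult_left_mono mult.assoc)
qed

lemma W_le_transient:
  assumes "t \<in> {0..T1}"
  shows "W t \<le> (b - a) + (Rs + XM) + 2 * Gb"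
proof -
  have x: "norm (x t) \<le> Rs" using transient_phase assms by blast
  have "ue t \<le> b - a" using uI_in_ab[of t] ur_in_ab assms unfolding ue_def by auto
  moreover have "xe t \<le> Rs + XM"
    using x XM(2) uI_in_ab[of t] assms norm_triangle_ineq4[of "x t" "\<Xi> (uI t)"] unfolding xe_def by force
  moreover have "\<bar>r - g (x t)\<bar> \<le> 2 * Gb" using abs_r_minus_g_le x by simp
  ultimately show ?thesis unfolding W_def by linarith
qed

lemma W_exponential_decay: "\<exists>M \<nu>. M > 0 \<and> \<nu> > 0 \<and> (\<forall>t\<ge>0. W t \<le> M * exp (- \<nu> * t))"
proof -
  define \<nu> where "\<nu> = - ln \<rho> / S"
  define B0 where "B0 = (b - a) + (Rs + XM) + 2 * Gb"
  define K where "K = (1 + m + (S + c_drift + 1) * c_Q) * (1 + 1 / \<beta>) * V T1"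
  define M where "M = B0 * exp (\<nu> * T1) + K * exp (\<nu> * (T1 + S)) + 1"
  have "\<nu> > 0" unfolding \<nu>_def using ln_less_zero[OF \<rho>] S(1) by (simp add: divide_neg_pos)
  have "B0 \<ge> 0" unfolding B0_def using a_b_order umin_less_umax constants_pos XM Gb by simp
  have "K \<ge> 0" unfolding K_def V_def ue_def xe_def using constants_pos S(1) A1_constants_pos by simp
  have bound: "W t \<le> M * exp (- \<nu> * t)" if t: "0 \<le> t" for t
  proof (cases "t \<le> T1")
    case True
    have "1 \<le> exp (\<nu> * T1) * exp (- \<nu> * t)"
      using True \<open>\<nu> > 0\<close> by (simp add: exp_add[symmetric] algebra_simps mult_left_mono)
    then have "B0 \<le> B0 * exp (\<nu> * T1) * exp (- \<nu> * t)"
      using \<open>B0 \<ge> 0\<close> mult_left_mono[of 1 _ B0] by (simp add: mult.assoc)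
    also have "\<dots> \<le> M * exp (- \<nu> * t)"
      unfolding M_def using \<open>K \<ge> 0\<close> by (intro mult_right_mono) auto
    finally show ?thesis using W_le_transient[of t] True t unfolding B0_def by simp
  next
    case False
    define n where "n = nat \<lfloor>(t - T1) / S\<rfloor>"
    have "real n = of_int \<lfloor>(t - T1) / S\<rfloor>" unfolding n_def using False S(1) by simp
    then have "real n \<le> (t - T1) / S" "(t - T1) / S < real n + 1" by linarith+
    then have n: "real n * S \<le> t - T1" "t - T1 < real n * S + S" using S(1) by (simp_all add: field_simps)
    then have "t \<in> {t_win n..t_win n + S}" unfolding t_win_def by simp
    then have window: "W t \<le> (1 + m + (S + c_drift + 1) * c_Q) * (1 + 1 / \<beta>) * V (t_win n)"
      by (rule W_le_in_window)
    have "\<rho> ^ n \<le> exp (\<nu> * (T1 + S)) * exp (- \<nu> * t)"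
      unfolding \<nu>_def by (rule power_le_exp_decay[OF \<rho> S(1)]) (use n in simp)
    moreover have "0 \<le> V T1" unfolding V_def ue_def xe_def using constants_pos by simp
    ultimately have "V (t_win n) \<le> exp (\<nu> * (T1 + S)) * exp (- \<nu> * t) * V T1"
      using lyapunov_decay[of n] by (meson mult_right_mono order_trans)
    moreover have "0 \<le> (1 + m + (S + c_drift + 1) * c_Q) * (1 + 1 / \<beta>)"
      using constants_pos A1_constants_pos S(1) by simp
    ultimately have "W t \<le> K * exp (\<nu> * (T1 + S)) * exp (- \<nu> * t)"
      using window mult_left_mono unfolding K_def by (fastforce simp: mult_ac)
    also have "\<dots> \<le> M * exp (- \<nu> * t)"
      unfolding M_def using \<open>B0 \<ge> 0\<close> by (intro mult_right_mono) auto
    finally show ?thesis .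
  qed
  have "M > 0" unfolding M_def using \<open>B0 \<ge> 0\<close> \<open>K \<ge> 0\<close> by (simp add: add_nonneg_pos)
  with \<open>\<nu> > 0\<close> bound show ?thesis by blast
qed

lemma convergence:
  "let ur = u_ref g \<Xi> umin umax r; u = (\<lambda>t. uI t + \<tau>p * k * (r - g (x t))) in
     (x \<longlongrightarrow> \<Xi> ur) at_top \<and> (u \<longlongrightarrow> ur) at_top \<and> ((\<lambda>t. g (x t)) \<longlongrightarrow> r) at_top \<and>
     (\<exists>M \<nu>. M > 0 \<and> \<nu> > 0 \<and> (\<forall>t\<ge>0.
        norm (x t - \<Xi> ur) \<le> M * exp (- \<nu> * t) \<and>
        \<bar>u t - ur\<bar> \<le> M * exp (- \<nu> * t) \<and>
        \<bar>g (x t) - r\<bar> \<le> M * exp (- \<nu> * t)))"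
proof -
  obtain M \<nu> where M: "M > 0" "\<nu> > 0" and W: "\<forall>t\<ge>0. W t \<le> M * exp (- \<nu> * t)"
    using W_exponential_decay by blast
  define M' where "M' = (1 + LX + \<tau>p) * M"
  have "M' > 0" using M LX(1) \<tau>p_nonneg by (simp add: M'_def)
  have "(1 + LX + \<tau>p) * W t \<le> M' * exp (- \<nu> * t)" if "0 \<le> t" for t
    using W that LX(1) \<tau>p_nonneg mult_left_mono[of "W t" _ "1 + LX + \<tau>p"] by (fastforce simp: M'_def)
  then have bounds: "\<forall>t\<ge>0. norm (x t - \<Xi> ur) \<le> M' * exp (- \<nu> * t) \<and>
      \<bar>u_plant t - ur\<bar> \<le> M' * exp (- \<nu> * t) \<and> \<bar>g (x t) - r\<bar> \<le> M' * exp (- \<nu> * t)"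
    using errors_le_W order_trans by meson
  have "(x \<longlongrightarrow> \<Xi> ur) at_top" "(u_plant \<longlongrightarrow> ur) at_top" "((\<lambda>t. g (x t)) \<longlongrightarrow> r) at_top"
    by (rule tendsto_of_exponential_bound[OF M(2)], use bounds in auto)+
  then show ?thesis
    unfolding Let_def ur_def[symmetric] u_plant_def[symmetric] using \<open>M' > 0\<close> M(2) bounds by blast
qed

end

context gain_constants
begin

lemma closed_loop_convergence:
  "\<forall>k r x uI. 0 < k \<and> k < gain_bound \<and> r \<in> {g (\<Xi> umin) .. g (\<Xi> umax)} \<and>
     (x 0, uI 0) \<in> XT \<and> closed_loop_sol f g umin umax k \<tau>p r x uI \<longrightarrow>
     (let ur = u_ref g \<Xi> umin umax r; u = (\<lambda>t. uI t + \<tau>p * k * (r - g (x t))) in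
       (x \<longlongrightarrow> \<Xi> ur) at_top \<and> (u \<longlongrightarrow> ur) at_top \<and> ((\<lambda>t. g (x t)) \<longlongrightarrow> r) at_top \<and>
       (\<exists>M \<nu>. M > 0 \<and> \<nu> > 0 \<and> (\<forall>t\<ge>0.
          norm (x t - \<Xi> ur) \<le> M * exp (- \<nu> * t) \<and>
          \<bar>u t - ur\<bar> \<le> M * exp (- \<nu> * t) \<and>
          \<bar>g (x t) - r\<bar> \<le> M * exp (- \<nu> * t))))"
proof (intro allI impI)
  fix k r x uI
  assume "0 < k \<and> k < gain_bound \<and> r \<in> {g (\<Xi> umin) .. g (\<Xi> umax)} \<and>
    (x 0, uI 0) \<in> XT \<and> closed_loop_sol f g umin umax k \<tau>p r x uI"
  then interpret closed_loop_trajectory f g \<Xi> \<gamma> umin umax \<delta> \<epsilon>0 lam m \<mu> \<tau>p T XT a b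
    LX XM S R0 Rs Lf Lg Gb k r x uI
    by unfold_locales auto
  show "let ur = u_ref g \<Xi> umin umax r; u = (\<lambda>t. uI t + \<tau>p * k * (r - g (x t))) in
       (x \<longlongrightarrow> \<Xi> ur) at_top \<and> (u \<longlongrightarrow> ur) at_top \<and> ((\<lambda>t. g (x t)) \<longlongrightarrow> r) at_top \<and>
       (\<exists>M \<nu>. M > 0 \<and> \<nu> > 0 \<and> (\<forall>t\<ge>0.
          norm (x t - \<Xi> ur) \<le> M * exp (- \<nu> * t) \<and>
          \<bar>u t - ur\<bar> \<le> M * exp (- \<nu> * t) \<and>
          \<bar>g (x t) - r\<bar> \<le> M * exp (- \<nu> * t)))"
    by (rule convergence)
qed

end

context plant_setting
begin

lemma ex_gain_constants: "\<exists>LX XM S R0 Rs Lf Lg Gb.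
  gain_constants f g \<Xi> \<gamma> umin umax \<delta> \<epsilon>0 lam m \<mu> \<tau>p T XT a b LX XM S R0 Rs Lf Lg Gb"
proof -
  obtain LX where LX: "LX > 0" "\<forall>u\<in>{a..b}. \<forall>v\<in>{a..b}. norm (\<Xi> u - \<Xi> v) \<le> LX * \<bar>u - v\<bar>"
    using C1_on_lipschitz_on_Icc[OF \<Xi>_C1] by blast
  have "compact (\<Xi> ` {a..b})"
    using compact_continuous_image[OF C1_on_continuous_on[OF \<Xi>_C1]] by blast
  then obtain B where "\<forall>u\<in>{a..b}. norm (\<Xi> u) \<le> B"
    using compact_imp_bounded[of "\<Xi> ` {a..b}"] unfolding bounded_iff by blast
  then have XM: "max B 0 \<ge> 0" "\<forall>u\<in>{a..b}. norm (\<Xi> u) \<le> max B 0" by force+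
  define S where "S = ln (4 * m) / lam"
  have S: "S > 0" "m * exp (- lam * S) \<le> 1/4"
  proof -
    show "S > 0" unfolding S_def using A1_constants_pos by (intro divide_pos_pos) auto
    have "exp (- lam * S) = 1 / (4 * m)"
      unfolding S_def using A1_constants_pos by (simp add: exp_minus inverse_eq_divide)
    then show "m * exp (- lam * S) \<le> 1/4" using A1_constants_pos by simp
  qed
  obtain R0 where R0: "R0 \<ge> 0" "\<forall>p\<in>XT. \<forall>\<phi>. \<phi> 0 = fst p \<and> plant_sol f (\<lambda>_. snd p) {0..T} \<phi> \<longrightarrow>
      (\<forall>t\<in>{0..T}. norm (\<phi> t) \<le> R0)"
    using frozen_sols_bounded by blast
  define Rs where "Rs = R0 + max B 0 + m * \<epsilon>0 + 1"
  have "Rs \<ge> 0" unfolding Rs_def using R0 A1_constants_pos by simp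
  obtain Lf where Lf: "Lf > 0" "\<forall>p q w1 w2. norm p \<le> Rs \<longrightarrow> norm q \<le> Rs \<longrightarrow> w1 \<in> {a-1..b+1} \<longrightarrow>
      w2 \<in> {a-1..b+1} \<longrightarrow> norm (f p w1 - f q w2) \<le> Lf * (norm (p - q) + \<bar>w1 - w2\<bar>)"
    using C1_map_lipschitz_on_bounded[OF f_C1] by blast
  obtain Lg where Lg: "Lg > 0" "Lg-lipschitz_on (cball 0 Rs) g"
    using loc_lipschitz_lipschitz_on_cball[OF g_loc_lipschitz] by blast
  have Gb: "\<bar>g p\<bar> \<le> \<bar>g 0\<bar> + Lg * Rs" if "p \<in> cball 0 Rs" for p
  proof -
    have "\<bar>g p - g 0\<bar> \<le> Lg * dist p 0"
      using lipschitz_onD[OF Lg(2) that, of 0] \<open>Rs \<ge> 0\<close> by (simp add: dist_real_def)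
    also have "\<dots> \<le> Lg * Rs" using that Lg(1) by (intro mult_left_mono) (auto simp: dist_norm)
    finally show ?thesis by linarith
  qed
  have "gain_constants f g \<Xi> \<gamma> umin umax \<delta> \<epsilon>0 lam m \<mu> \<tau>p T XT a b LX (max B 0) S R0 Rs Lf Lg
      (\<bar>g 0\<bar> + Lg * Rs)"
    unfolding gain_constants_def gain_constants_axioms_def
    using plant_setting_axioms LX XM S R0 Rs_def Lf Lg Gb \<open>Rs \<ge> 0\<close> by auto
  then show ?thesis by blast
qed

end

theorem lemma2:
  fixes f :: "'a::euclidean_space \<Rightarrow> real \<Rightarrow> 'a" and g :: "'a \<Rightarrow> real"
    and \<Xi> :: "real \<Rightarrow> 'a" and \<gamma> :: "real \<Rightarrow> real"
    and umin umax \<delta> \<epsilon>0 lam m \<mu> \<tau>p T :: real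
    and XT :: "('a \<times> real) set"
  assumes "umin < umax"
    and "C2_map (\<lambda>p. f (fst p) (snd p))"
    and "loc_lipschitz g"
    and "A2 f g \<Xi> umin umax \<delta> \<epsilon>0 lam m \<mu>"
    and "A3 f \<Xi> umin umax \<delta> \<gamma>"
    and "\<tau>p \<ge> 0"
    and "bounded (range g) \<or> \<tau>p = 0"
    and "T > 0"
    and "compact XT"
    and "XT \<subseteq> UNIV \<times> Udelta umin umax \<delta>"
    and "\<forall>(x0, u0)\<in>XT. (\<exists>x. x 0 = x0 \<and> plant_sol f (\<lambda>_. u0) {0..T} x) \<and>
           (\<forall>x. x 0 = x0 \<and> plant_sol f (\<lambda>_. u0) {0..T} x \<longrightarrow> norm (x T - \<Xi> u0) \<le> \<epsilon>0)"
  shows "\<exists>\<kappa>>0. \<forall>k r x uI. 0 < k \<and> k < \<kappa> \<and> r \<in> {g (\<Xi> umin) .. g (\<Xi> umax)} \<and>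
           (x 0, uI 0) \<in> XT \<and> closed_loop_sol f g umin umax k \<tau>p r x uI \<longrightarrow>
           (let ur = u_ref g \<Xi> umin umax r; u = (\<lambda>t. uI t + \<tau>p * k * (r - g (x t))) in
             (x \<longlongrightarrow> \<Xi> ur) at_top \<and> (u \<longlongrightarrow> ur) at_top \<and> ((\<lambda>t. g (x t)) \<longlongrightarrow> r) at_top \<and>
             (\<exists>M \<nu>. M > 0 \<and> \<nu> > 0 \<and> (\<forall>t\<ge>0.
                norm (x t - \<Xi> ur) \<le> M * exp (- \<nu> * t) \<and>
                \<bar>u t - ur\<bar> \<le> M * exp (- \<nu> * t) \<and>
                \<bar>g (x t) - r\<bar> \<le> M * exp (- \<nu> * t))))"
proof -
  interpret plant_setting f g \<Xi> \<gamma> umin umax \<delta> \<epsilon>0 lam m \<mu> \<tau>p T XT "umin - \<delta>" "umax + \<delta>"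
    using assms C2_map_imp_C1_map[OF assms(2)] by unfold_locales auto
  obtain LX XM S R0 Rs Lf Lg Gb where "gain_constants f g \<Xi> \<gamma> umin umax \<delta> \<epsilon>0 lam m \<mu> \<tau>p T XT
      (umin - \<delta>) (umax + \<delta>) LX XM S R0 Rs Lf Lg Gb"
    using ex_gain_constants by blast
  then interpret gain_constants f g \<Xi> \<gamma> umin umax \<delta> \<epsilon>0 lam m \<mu> \<tau>p T XT
    "umin - \<delta>" "umax + \<delta>" LX XM S R0 Rs Lf Lg Gb .
  show ?thesis using gain_bound_pos closed_loop_convergence by blast
qed

end
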